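(* If $A\| B$ is a right D2 algebra extension, then the extension $\rho:A^{\mathrm{op}}\to\mathcal E=\mathrm{End}({}_BA)$ is left D2 and left balanced. Explicitly, if $\gamma_j\in S,u_j\in T$ is a right D2 quasibase for $A\| B$, then $T_j:=\sum_k\big(x\mapsto\gamma_j(xu_k^1)u_k^2\big)\otimes_{\rho(A)}\gamma_k\in(\mathcal E\otimes_{\rho(A)}\mathcal E)^{\rho(A)}$ and $\mathcal B_j\in\mathrm{End}({}_{\rho(A)}\mathcal E_{\rho(A)})$, $\mathcal B_j(f)=u_j^1f(u_j^2-)$, form a left D2 quasibase: $f\otimes_{\rho(A)}g=\sum_jT_j^1\otimes T_j^2\circ\mathcal B_j(f)\circ g$ for all $f,g\in\mathcal E$.
   Context: Algebras over a commutative ring $K$; an algebra extension $C\| D$ is a unit-preserving homomorphism $D\to C$. For $A\| B$: $S=\mathrm{End}({}_BA_B)$, $\mathcal E=\mathrm{End}({}_BA)$ (composition), $T=(A\otimes_BA)^B$ with Sweedler notation $t=t^1\otimes t^2$; $\rho(a)(x)=xa$, so $\rho:A^{\mathrm{op}}\to\mathcal E$ is an algebra homomorphism. $C\| D$ is right D2 if $C\otimes_DC$ is isomorphic as $C$-$D$-bimodule to a direct summand of some finite direct sum $C^n$, left D2 if the same holds as $D$-$C$-bimodules. Right D2 quasibase of $A\| B$: finitely many $\gamma_j\in S,u_j\in T$ with $a\otimes_Ba'=\sum_ja\gamma_j(a')u_j^1\otimes u_j^2$; left D2 quasibase of $C\| D$: finitely many $\beta_i\in\mathrm{End}({}_DC_D)$,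 $t_i\in(C\otimes_DC)^D$ with $c\otimes_Dc'=\sum_it_i^1\otimes t_i^2\beta_i(c)c'$. $C\| D$ is left balanced if every additive map $h:C\to C$ commuting with all elements of $\mathrm{End}({}_DC)$ is left multiplication by an element of the image of $D$. *)

theory Defs
  imports "HOL-Algebra.Ring"
begin

text \<open>Formal sums of simple tensors are lists of pairs; their image in the free
abelian group Z[C x C] is given by multiplicities.\<close>

definition dlt :: "'x \<Rightarrow> ('x \<Rightarrow> int)" where
  "dlt p = (\<lambda>q. if q = p then 1 else 0)"

definition fsum_of :: "'x list \<Rightarrow> ('x \<Rightarrow> int)" where
  "fsum_of xs = (\<lambda>p. int (count_list xs p))"

inductive_set trel :: "'c ring \<Rightarrow> 'd ring \<Rightarrow> ('d \<Rightarrow> 'c) \<Rightarrow> ('c \<times> 'c \<Rightarrow> int) set"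
  for C D phi where
  zero: "(\<lambda>_. 0) \<in> trel C D phi"
| addl: "\<lbrakk>x \<in> carrier C; x' \<in> carrier C; y \<in> carrier C\<rbrakk> \<Longrightarrow>
     dlt (x \<oplus>\<^bsub>C\<^esub> x', y) - dlt (x, y) - dlt (x', y) \<in> trel C D phi"
| addr: "\<lbrakk>x \<in> carrier C; y \<in> carrier C; y' \<in> carrier C\<rbrakk> \<Longrightarrow>
     dlt (x, y \<oplus>\<^bsub>C\<^esub> y') - dlt (x, y) - dlt (x, y') \<in> trel C D phi"
| bal: "\<lbrakk>x \<in> carrier C; d \<in> carrier D; y \<in> carrier C\<rbrakk> \<Longrightarrow>
     dlt (x \<otimes>\<^bsub>C\<^esub> phi d, y) - dlt (x, phi d \<otimes>\<^bsub>C\<^esub> y) \<in> trel C D phi"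
| diff: "\<lbrakk>f \<in> trel C D phi; g \<in> trel C D phi\<rbrakk> \<Longrightarrow> f - g \<in> trel C D phi"

definition teq :: "'c ring \<Rightarrow> 'd ring \<Rightarrow> ('d \<Rightarrow> 'c) \<Rightarrow> ('c \<times> 'c) list \<Rightarrow> ('c \<times> 'c) list \<Rightarrow> bool" where
  "teq C D phi xs ys \<longleftrightarrow> fsum_of xs - fsum_of ys \<in> trel C D phi"

definition fsums :: "'c ring \<Rightarrow> ('c \<times> 'c) list set" where
  "fsums C = {xs. set xs \<subseteq> carrier C \<times> carrier C}"

definition tcls :: "'c ring \<Rightarrow> 'd ring \<Rightarrow> ('d \<Rightarrow> 'c) \<Rightarrow> ('c \<times> 'c) list \<Rightarrow> ('c \<times> 'c) list set" where
  "tcls C D phi xs = {ys \<in> fsums C. teq C D phi xs ys}"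

definition tens :: "'c ring \<Rightarrow> 'd ring \<Rightarrow> ('d \<Rightarrow> 'c) \<Rightarrow> ('c \<times> 'c) list set set" where
  "tens C D phi = tcls C D phi ` fsums C"

definition tlift :: "'c ring \<Rightarrow> 'd ring \<Rightarrow> ('d \<Rightarrow> 'c) \<Rightarrow> (('c \<times> 'c) list \<Rightarrow> ('c \<times> 'c) list)
    \<Rightarrow> ('c \<times> 'c) list set \<Rightarrow> ('c \<times> 'c) list set" where
  "tlift C D phi F X = (\<Union>xs\<in>X. tcls C D phi (F xs))"

definition tadd :: "'c ring \<Rightarrow> 'd ring \<Rightarrow> ('d \<Rightarrow> 'c) \<Rightarrow>
    ('c \<times> 'c) list set \<Rightarrow> ('c \<times> 'c) list set \<Rightarrow> ('c \<times> 'c) list set" where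
  "tadd C D phi X Y = (\<Union>xs\<in>X. \<Union>ys\<in>Y. tcls C D phi (xs @ ys))"

definition lmul :: "'c ring \<Rightarrow> 'c \<Rightarrow> ('c \<times> 'c) list \<Rightarrow> ('c \<times> 'c) list" where
  "lmul C c xs = map (\<lambda>(x, y). (c \<otimes>\<^bsub>C\<^esub> x, y)) xs"

definition rmul :: "'c ring \<Rightarrow> 'c \<Rightarrow> ('c \<times> 'c) list \<Rightarrow> ('c \<times> 'c) list" where
  "rmul C c xs = map (\<lambda>(x, y). (x, y \<otimes>\<^bsub>C\<^esub> c)) xs"

definition cvec :: "'c ring \<Rightarrow> nat \<Rightarrow> (nat \<Rightarrow> 'c) set" where
  "cvec C n = {..<n} \<rightarrow>\<^sub>E carrier C"

definition vadd :: "'c ring \<Rightarrow> nat \<Rightarrow> (nat \<Rightarrow> 'c) \<Rightarrow> (nat \<Rightarrow> 'c) \<Rightarrow> (nat \<Rightarrow> 'c)" where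
  "vadd C n v w = (\<lambda>i\<in>{..<n}. v i \<oplus>\<^bsub>C\<^esub> w i)"

definition vlmul :: "'c ring \<Rightarrow> nat \<Rightarrow> 'c \<Rightarrow> (nat \<Rightarrow> 'c) \<Rightarrow> (nat \<Rightarrow> 'c)" where
  "vlmul C n c v = (\<lambda>i\<in>{..<n}. c \<otimes>\<^bsub>C\<^esub> v i)"

definition vrmul :: "'c ring \<Rightarrow> nat \<Rightarrow> 'c \<Rightarrow> (nat \<Rightarrow> 'c) \<Rightarrow> (nat \<Rightarrow> 'c)" where
  "vrmul C n c v = (\<lambda>i\<in>{..<n}. v i \<otimes>\<^bsub>C\<^esub> c)"

text \<open>Right D2: C \<otimes>_D C is, as C-D-bimodule, isomorphic to a direct summand of C^n,
i.e. it is a C-D-bimodule retract of C^n (split mono iota, retraction pi).\<close>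
definition right_D2 :: "'c ring \<Rightarrow> 'd ring \<Rightarrow> ('d \<Rightarrow> 'c) \<Rightarrow> bool" where
  "right_D2 C D phi \<longleftrightarrow> (\<exists>n iota pi.
     iota \<in> tens C D phi \<rightarrow> cvec C n \<and> pi \<in> cvec C n \<rightarrow> tens C D phi \<and>
     (\<forall>X\<in>tens C D phi. \<forall>Y\<in>tens C D phi. iota (tadd C D phi X Y) = vadd C n (iota X) (iota Y)) \<and>
     (\<forall>X\<in>tens C D phi. \<forall>c\<in>carrier C. iota (tlift C D phi (lmul C c) X) = vlmul C n c (iota X)) \<and>
     (\<forall>X\<in>tens C D phi. \<forall>d\<in>carrier D. iota (tlift C D phi (rmul C (phi d)) X) = vrmul C n (phi d) (iota X)) \<and>
     (\<forall>v\<in>cvec C n. \<forall>w\<in>cvec C n. pi (vadd C n v w) = tadd C D phi (pi v) (pi w)) \<and>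
     (\<forall>v\<in>cvec C n. \<forall>c\<in>carrier C. pi (vlmul C n c v) = tlift C D phi (lmul C c) (pi v)) \<and>
     (\<forall>v\<in>cvec C n. \<forall>d\<in>carrier D. pi (vrmul C n (phi d) v) = tlift C D phi (rmul C (phi d)) (pi v)) \<and>
     (\<forall>X\<in>tens C D phi. pi (iota X) = X))"

definition left_D2 :: "'c ring \<Rightarrow> 'd ring \<Rightarrow> ('d \<Rightarrow> 'c) \<Rightarrow> bool" where
  "left_D2 C D phi \<longleftrightarrow> (\<exists>n iota pi.
     iota \<in> tens C D phi \<rightarrow> cvec C n \<and> pi \<in> cvec C n \<rightarrow> tens C D phi \<and>
     (\<forall>X\<in>tens C D phi. \<forall>Y\<in>tens C D phi. iota (tadd C D phi X Y) = vadd C n (iota X) (iota Y)) \<and>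
     (\<forall>X\<in>tens C D phi. \<forall>d\<in>carrier D. iota (tlift C D phi (lmul C (phi d)) X) = vlmul C n (phi d) (iota X)) \<and>
     (\<forall>X\<in>tens C D phi. \<forall>c\<in>carrier C. iota (tlift C D phi (rmul C c) X) = vrmul C n c (iota X)) \<and>
     (\<forall>v\<in>cvec C n. \<forall>w\<in>cvec C n. pi (vadd C n v w) = tadd C D phi (pi v) (pi w)) \<and>
     (\<forall>v\<in>cvec C n. \<forall>d\<in>carrier D. pi (vlmul C n (phi d) v) = tlift C D phi (lmul C (phi d)) (pi v)) \<and>
     (\<forall>v\<in>cvec C n. \<forall>c\<in>carrier C. pi (vrmul C n c v) = tlift C D phi (rmul C c) (pi v)) \<and>
     (\<forall>X\<in>tens C D phi. pi (iota X) = X))"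

definition additive_on :: "'c ring \<Rightarrow> ('c \<Rightarrow> 'c) \<Rightarrow> bool" where
  "additive_on C f \<longleftrightarrow> (\<forall>x\<in>carrier C. \<forall>y\<in>carrier C. f (x \<oplus>\<^bsub>C\<^esub> y) = f x \<oplus>\<^bsub>C\<^esub> f y)"

definition lend :: "'c ring \<Rightarrow> 'd ring \<Rightarrow> ('d \<Rightarrow> 'c) \<Rightarrow> ('c \<Rightarrow> 'c) set" where
  "lend C D phi = {f. f \<in> carrier C \<rightarrow> carrier C \<and> additive_on C f \<and>
     (\<forall>d\<in>carrier D. \<forall>x\<in>carrier C. f (phi d \<otimes>\<^bsub>C\<^esub> x) = phi d \<otimes>\<^bsub>C\<^esub> f x)}"

definition bend :: "'c ring \<Rightarrow> 'd ring \<Rightarrow> ('d \<Rightarrow> 'c) \<Rightarrow> ('c \<Rightarrow> 'c) set" where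
  "bend C D phi = {f \<in> lend C D phi.
     \<forall>d\<in>carrier D. \<forall>x\<in>carrier C. f (x \<otimes>\<^bsub>C\<^esub> phi d) = f x \<otimes>\<^bsub>C\<^esub> phi d}"

definition tcent :: "'c ring \<Rightarrow> 'd ring \<Rightarrow> ('d \<Rightarrow> 'c) \<Rightarrow> ('c \<times> 'c) list set" where
  "tcent C D phi = {xs \<in> fsums C. \<forall>d\<in>carrier D.
     teq C D phi (lmul C (phi d) xs) (rmul C (phi d) xs)}"

text \<open>Right D2 quasibase gamma_j, u_j (j < m); u_j is given by a representing formal sum
(Sweedler notation u_j = u_j^1 \<otimes> u_j^2).\<close>
definition right_D2_qb :: "'c ring \<Rightarrow> 'd ring \<Rightarrow> ('d \<Rightarrow> 'c) \<Rightarrow> nat \<Rightarrow> (nat \<Rightarrow> 'c \<Rightarrow> 'c)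
    \<Rightarrow> (nat \<Rightarrow> ('c \<times> 'c) list) \<Rightarrow> bool" where
  "right_D2_qb C D phi m gamma u \<longleftrightarrow>
     (\<forall>j<m. gamma j \<in> bend C D phi \<and> u j \<in> tcent C D phi) \<and>
     (\<forall>a\<in>carrier C. \<forall>a'\<in>carrier C. teq C D phi [(a, a')]
        (concat (map (\<lambda>j. map (\<lambda>(p, q). (a \<otimes>\<^bsub>C\<^esub> gamma j a' \<otimes>\<^bsub>C\<^esub> p, q)) (u j)) [0..<m])))"

definition left_D2_qb :: "'c ring \<Rightarrow> 'd ring \<Rightarrow> ('d \<Rightarrow> 'c) \<Rightarrow> nat \<Rightarrow> (nat \<Rightarrow> 'c \<Rightarrow> 'c)
    \<Rightarrow> (nat \<Rightarrow> ('c \<times> 'c) list) \<Rightarrow> bool" where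
  "left_D2_qb C D phi m beta t \<longleftrightarrow>
     (\<forall>i<m. beta i \<in> bend C D phi \<and> t i \<in> tcent C D phi) \<and>
     (\<forall>c\<in>carrier C. \<forall>c'\<in>carrier C. teq C D phi [(c, c')]
        (concat (map (\<lambda>i. map (\<lambda>(p, q). (p, q \<otimes>\<^bsub>C\<^esub> beta i c \<otimes>\<^bsub>C\<^esub> c')) (t i)) [0..<m])))"

definition left_balanced :: "'c ring \<Rightarrow> 'd ring \<Rightarrow> ('d \<Rightarrow> 'c) \<Rightarrow> bool" where
  "left_balanced C D phi \<longleftrightarrow> (\<forall>h. h \<in> carrier C \<rightarrow> carrier C \<and> additive_on C h \<and>
       (\<forall>f\<in>lend C D phi. \<forall>x\<in>carrier C. h (f x) = f (h x)) \<longrightarrow>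
       (\<exists>d\<in>carrier D. \<forall>x\<in>carrier C. h x = phi d \<otimes>\<^bsub>C\<^esub> x))"

definition op_ring :: "'a ring \<Rightarrow> 'a ring" where
  "op_ring A = \<lparr>carrier = carrier A, mult = (\<lambda>x y. y \<otimes>\<^bsub>A\<^esub> x), one = \<one>\<^bsub>A\<^esub>,
     zero = \<zero>\<^bsub>A\<^esub>, add = (\<oplus>\<^bsub>A\<^esub>)\<rparr>"

text \<open>E = End(_B A) with composition; functions are taken extensional on carrier A.\<close>
definition End_ring :: "'a ring \<Rightarrow> 'b ring \<Rightarrow> ('b \<Rightarrow> 'a) \<Rightarrow> ('a \<Rightarrow> 'a) ring" where
  "End_ring A B phi = \<lparr>carrier = lend A B phi \<inter> extensional (carrier A),
     mult = (\<lambda>f g. restrict (f \<circ> g) (carrier A)), one = restrict id (carrier A),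
     zero = restrict (\<lambda>_. \<zero>\<^bsub>A\<^esub>) (carrier A),
     add = (\<lambda>f g. restrict (\<lambda>x. f x \<oplus>\<^bsub>A\<^esub> g x) (carrier A))\<rparr>"

definition rho :: "'a ring \<Rightarrow> 'a \<Rightarrow> ('a \<Rightarrow> 'a)" where
  "rho A a = restrict (\<lambda>x. x \<otimes>\<^bsub>A\<^esub> a) (carrier A)"

definition lsum :: "'a ring \<Rightarrow> 'a list \<Rightarrow> 'a" where
  "lsum A xs = foldr (\<lambda>x acc. x \<oplus>\<^bsub>A\<^esub> acc) xs \<zero>\<^bsub>A\<^esub>"

definition qbT :: "'a ring \<Rightarrow> nat \<Rightarrow> (nat \<Rightarrow> 'a \<Rightarrow> 'a) \<Rightarrow> (nat \<Rightarrow> ('a \<times> 'a) list)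
    \<Rightarrow> nat \<Rightarrow> (('a \<Rightarrow> 'a) \<times> ('a \<Rightarrow> 'a)) list" where
  "qbT A m gamma u j = concat (map (\<lambda>k. map (\<lambda>(p, q).
      (restrict (\<lambda>x. gamma j (x \<otimes>\<^bsub>A\<^esub> p) \<otimes>\<^bsub>A\<^esub> q) (carrier A),
       restrict (gamma k) (carrier A))) (u k)) [0..<m])"

definition qbB :: "'a ring \<Rightarrow> 'b ring \<Rightarrow> ('b \<Rightarrow> 'a) \<Rightarrow> (nat \<Rightarrow> ('a \<times> 'a) list)
    \<Rightarrow> nat \<Rightarrow> ('a \<Rightarrow> 'a) \<Rightarrow> ('a \<Rightarrow> 'a)" where
  "qbB A B phi u j = restrict (\<lambda>f. restrict (\<lambda>x.
      lsum A (map (\<lambda>(p, q). p \<otimes>\<^bsub>A\<^esub> f (q \<otimes>\<^bsub>A\<^esub> x)) (u j))) (carrier A))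
     (carrier (End_ring A B phi))"

end

(* Fix a right D2 quasibase (\<gamma>\<^sub>j, u\<^sub>j) of A | B; one exists since the split embedding of
   A \<otimes>\<^sub>B A into A\<^sup>n provides it. For G in E = End(_B A) let c\<^sub>l(G) = u\<^sub>l\<^sup>1 G(u\<^sub>l\<^sup>2).
   Pushing the quasibase identity for 1 \<otimes> x through a \<otimes> b \<mapsto> a G(b) gives
   G = \<Sum>\<^sub>l \<rho>(c\<^sub>l(G)) \<gamma>\<^sub>l in E. Hence every tensor X of E \<otimes>\<^bsub>\<rho>(A)\<^esub> E equals \<Sum>\<^sub>l K\<^sub>l(X) \<otimes> \<gamma>\<^sub>l
   with well-defined coordinates K\<^sub>l(F \<otimes> G) = F \<rho>(c\<^sub>l(G)) in E, and two tensors agree as soon as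
   their coordinates agree pointwise on A. For the T\<^sub>j, their \<rho>(A)-multiples and the right-hand
   side f \<otimes> g of the claimed identity these coordinates are computed by applying the quasibase
   identity once more (through a \<otimes> b \<mapsto> \<gamma>\<^sub>j(a) b and a \<otimes> b \<mapsto> a f(b w)), which makes the sums
   collapse. A left D2 quasibase (\<beta>\<^sub>i, t\<^sub>i) makes v \<mapsto> \<Sum>\<^sub>i t\<^sub>i v\<^sub>i a retraction of
   c \<otimes> c' \<mapsto> (\<beta>\<^sub>i(c) c')\<^sub>i, so the extension is left D2. Left balance holds without any depth two
   hypothesis: h commutes with the maps g \<mapsto> g\<^sub>0(-) g(1), forcing h(g\<^sub>0) = \<rho>(h(1)(1)) g\<^sub>0. *)

theory Submission
  imports Defs "HOL-Library.Multiset" "HOL-Library.Function_Algebras"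
begin

section \<open>Formal sums and tensor classes\<close>

lemma fsum_of_Nil [simp]: "fsum_of [] = 0"
  by (simp add: fsum_of_def fun_eq_iff)

lemma fsum_of_Cons [simp]: "fsum_of (x # xs) = dlt x + fsum_of xs"
  by (simp add: fsum_of_def dlt_def fun_eq_iff)

lemma fsum_of_append [simp]: "fsum_of (xs @ ys) = fsum_of xs + fsum_of ys"
  by (simp add: fsum_of_def fun_eq_iff)

lemma fsum_of_eq_iff: "fsum_of xs = fsum_of ys \<longleftrightarrow> mset xs = mset ys"
  by (simp add: fsum_of_def fun_eq_iff multiset_eq_iff count_mset)

lemma trel_0: "0 \<in> trel C D phi"
  using trel.zero[of C D phi] by (simp add: zero_fun_def)

lemma trel_uminus: "f \<in> trel C D phi \<Longrightarrow> - f \<in> trel C D phi"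
  using trel.diff[OF trel_0, of f] by simp

lemma trel_add: "f \<in> trel C D phi \<Longrightarrow> g \<in> trel C D phi \<Longrightarrow> f + g \<in> trel C D phi"
  by (metis diff_minus_eq_add trel.diff trel_uminus)

lemma teq_refl: "teq C D phi xs xs"
  by (simp add: teq_def trel_0)

lemma teq_sym: "teq C D phi xs ys \<Longrightarrow> teq C D phi ys xs"
  unfolding teq_def using trel_uminus by fastforce

lemma teq_trans [trans]: "teq C D phi xs ys \<Longrightarrow> teq C D phi ys zs \<Longrightarrow> teq C D phi xs zs"
  unfolding teq_def using trel_add by fastforce

lemma teq_append:
  "teq C D phi xs ys \<Longrightarrow> teq C D phi xs' ys' \<Longrightarrow> teq C D phi (xs @ xs') (ys @ ys')"
  unfolding teq_def using trel_add by (fastforce simp: algebra_simps)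

lemma teq_mset: "mset xs = mset ys \<Longrightarrow> teq C D phi xs ys"
  unfolding teq_def using fsum_of_eq_iff[of xs ys] by (simp add: trel_0)

lemma teq_cancel: "teq C D phi (xs @ zs) (ys @ zs) \<Longrightarrow> teq C D phi xs ys"
  unfolding teq_def by simp

lemma teq_concat:
  "(\<And>i. i \<in> set is \<Longrightarrow> teq C D phi (f i) (g i)) \<Longrightarrow>
    teq C D phi (concat (map f is)) (concat (map g is))"
  by (induction "is") (auto intro: teq_append teq_refl)

lemma teq_map:
  "(\<And>i. i \<in> set is \<Longrightarrow> teq C D phi [f i] [g i]) \<Longrightarrow> teq C D phi (map f is) (map g is)"
  using teq_concat[of "is" C D phi "\<lambda>i. [f i]" "\<lambda>i. [g i]"] by (simp add: map_concat)

lemma fsums_append [simp]: "xs @ ys \<in> fsums C \<longleftrightarrow> xs \<in> fsums C \<and> ys \<in> fsums C"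
  by (auto simp: fsums_def)

lemma fsums_Cons [simp]: "x # ys \<in> fsums C \<longleftrightarrow> x \<in> carrier C \<times> carrier C \<and> ys \<in> fsums C"
  by (auto simp: fsums_def)

lemma fsums_Nil [simp]: "[] \<in> fsums C"
  by (auto simp: fsums_def)

lemma fsums_concat [simp]: "concat xss \<in> fsums C \<longleftrightarrow> (\<forall>xs\<in>set xss. xs \<in> fsums C)"
  by (auto simp: fsums_def)

lemma fsums_map: "(\<And>p. p \<in> set xs \<Longrightarrow> f p \<in> carrier C \<times> carrier C) \<Longrightarrow> map f xs \<in> fsums C"
  by (force simp: fsums_def)

lemma fsumsD: "xs \<in> fsums C \<Longrightarrow> (x, y) \<in> set xs \<Longrightarrow> x \<in> carrier C \<and> y \<in> carrier C"
  by (auto simp: fsums_def)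

lemma mem_tcls: "ys \<in> tcls C D phi xs \<longleftrightarrow> ys \<in> fsums C \<and> teq C D phi xs ys"
  by (simp add: tcls_def)

lemma tcls_self: "xs \<in> fsums C \<Longrightarrow> xs \<in> tcls C D phi xs"
  by (simp add: tcls_def teq_refl)

lemma tcls_eq: "teq C D phi xs ys \<Longrightarrow> tcls C D phi xs = tcls C D phi ys"
  unfolding tcls_def by (metis teq_sym teq_trans)

lemma tcls_eq_iff: "xs \<in> fsums C \<Longrightarrow> tcls C D phi xs = tcls C D phi ys \<longleftrightarrow> teq C D phi xs ys"
  by (metis mem_tcls tcls_eq tcls_self teq_sym)

lemma tensE: "X \<in> tens C D phi \<Longrightarrow> (\<And>xs. xs \<in> fsums C \<Longrightarrow> X = tcls C D phi xs \<Longrightarrow> P) \<Longrightarrow> P"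
  unfolding tens_def by (erule imageE) simp

lemma tcls_in_tens: "xs \<in> fsums C \<Longrightarrow> tcls C D phi xs \<in> tens C D phi"
  unfolding tens_def by (rule imageI)

lemma some_in_tcls: "xs \<in> fsums C \<Longrightarrow> (SOME ys. ys \<in> tcls C D phi xs) \<in> tcls C D phi xs"
  by (rule someI, erule tcls_self)

lemma tadd_tcls:
  assumes "xs \<in> fsums C" and "ys \<in> fsums C"
  shows "tadd C D phi (tcls C D phi xs) (tcls C D phi ys) = tcls C D phi (xs @ ys)"
proof -
  have "tcls C D phi (xs' @ ys') = tcls C D phi (xs @ ys)"
    if "xs' \<in> tcls C D phi xs" and "ys' \<in> tcls C D phi ys" for xs' ys'
    using that by (metis mem_tcls tcls_eq teq_append)
  moreover have "tcls C D phi xs \<noteq> {}" and "tcls C D phi ys \<noteq> {}"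
    using tcls_self assms by blast+
  ultimately show ?thesis
    unfolding tadd_def by simp
qed

lemma tlift_tcls:
  assumes "xs \<in> fsums C"
    and "\<And>ys zs. ys \<in> fsums C \<Longrightarrow> zs \<in> fsums C \<Longrightarrow> teq C D phi ys zs \<Longrightarrow> teq C D phi (F ys) (F zs)"
  shows "tlift C D phi F (tcls C D phi xs) = tcls C D phi (F xs)"
proof -
  have "tcls C D phi (F ys) = tcls C D phi (F xs)" if "ys \<in> tcls C D phi xs" for ys
    using that assms by (metis mem_tcls tcls_eq teq_sym)
  moreover have "tcls C D phi xs \<noteq> {}"
    using tcls_self assms by blast
  ultimately show ?thesis
    unfolding tlift_def by simp
qed

lemma mset_concat_map_append:
  "mset (concat (map (\<lambda>i. f i @ g i) is)) = mset (concat (map f is) @ concat (map g is))"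
  by (induction "is") auto

lemma lmul_concat: "lmul C c (concat xss) = concat (map (lmul C c) xss)"
  unfolding lmul_def by (simp add: map_concat)

lemma rmul_concat: "rmul C c (concat xss) = concat (map (rmul C c) xss)"
  unfolding rmul_def by (simp add: map_concat)

lemma cvecD: "v \<in> cvec C n \<Longrightarrow> j < n \<Longrightarrow> v j \<in> carrier C"
  by (auto simp: cvec_def)

text \<open>\<^const>\<open>lsum\<close> lives on \<^typ>\<open>'a ring\<close>, not on ring schemes, hence the type constraint.\<close>

locale lsum_ring = ring R for R :: "'a ring" (structure)
begin

lemma lsum_Nil [simp]: "lsum R [] = \<zero>"
  by (simp add: lsum_def)

lemma lsum_Cons [simp]: "lsum R (x # xs) = x \<oplus> lsum R xs"
  by (simp add: lsum_def)

lemma lsum_closed [intro, simp]: "set xs \<subseteq> carrier R \<Longrightarrow> lsum R xs \<in> carrier R"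
  by (induction xs) auto

lemma lsum_map_closed [intro, simp]:
  "(\<And>x. x \<in> set xs \<Longrightarrow> f x \<in> carrier R) \<Longrightarrow> lsum R (map f xs) \<in> carrier R"
  by (induction xs) auto

lemma lsum_cong: "(\<And>x. x \<in> set xs \<Longrightarrow> f x = g x) \<Longrightarrow> lsum R (map f xs) = lsum R (map g xs)"
  by (simp cong: map_cong)

lemma lsum_append:
  "set xs \<subseteq> carrier R \<Longrightarrow> set ys \<subseteq> carrier R \<Longrightarrow> lsum R (xs @ ys) = lsum R xs \<oplus> lsum R ys"
  by (induction xs) (auto simp: a_assoc)

lemma lsum_mset: "mset xs = mset ys \<Longrightarrow> set xs \<subseteq> carrier R \<Longrightarrow> lsum R xs = lsum R ys"
proof (induction xs arbitrary: ys)
  case (Cons x xs)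
  then obtain ys1 ys2 where ys: "ys = ys1 @ x # ys2"
    by (metis list.set_intros(1) set_mset_mset split_list)
  with Cons have "lsum R xs = lsum R (ys1 @ ys2)" by simp
  moreover have "set ys \<subseteq> carrier R"
    using Cons.prems by (metis set_mset_mset)
  ultimately show ?case
    using ys by (simp add: lsum_append a_lcomm)
qed simp

lemma lsum_map_add:
  "(\<And>x. x \<in> set xs \<Longrightarrow> f x \<in> carrier R) \<Longrightarrow> (\<And>x. x \<in> set xs \<Longrightarrow> g x \<in> carrier R) \<Longrightarrow>
    lsum R (map (\<lambda>x. f x \<oplus> g x) xs) = lsum R (map f xs) \<oplus> lsum R (map g xs)"
  by (induction xs) (simp_all add: a_ac)

lemma lsum_map_zero [simp]: "lsum R (map (\<lambda>x. \<zero>) xs) = \<zero>"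
  by (induction xs) auto

lemma lsum_concat:
  "(\<And>xs. xs \<in> set xss \<Longrightarrow> set xs \<subseteq> carrier R) \<Longrightarrow>
    lsum R (concat xss) = lsum R (map (lsum R) xss)"
proof (induction xss)
  case (Cons xs xss)
  then have "set (concat xss) \<subseteq> carrier R" by auto
  with Cons show ?case by (simp add: lsum_append)
qed simp

lemma lsum_swap:
  "(\<And>a b. a \<in> set xs \<Longrightarrow> b \<in> set ys \<Longrightarrow> h a b \<in> carrier R) \<Longrightarrow>
    lsum R (map (\<lambda>a. lsum R (map (h a) ys)) xs) = lsum R (map (\<lambda>b. lsum R (map (\<lambda>a. h a b) xs)) ys)"
  by (induction xs) (simp_all add: lsum_map_add)

lemma lsum_mult_left:
  "c \<in> carrier R \<Longrightarrow> (\<And>x. x \<in> set xs \<Longrightarrow> f x \<in> carrier R) \<Longrightarrow>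
    c \<otimes> lsum R (map f xs) = lsum R (map (\<lambda>x. c \<otimes> f x) xs)"
  by (induction xs) (simp_all add: r_distr)

lemma lsum_mult_right:
  "c \<in> carrier R \<Longrightarrow> (\<And>x. x \<in> set xs \<Longrightarrow> f x \<in> carrier R) \<Longrightarrow>
    lsum R (map f xs) \<otimes> c = lsum R (map (\<lambda>x. f x \<otimes> c) xs)"
  by (induction xs) (simp_all add: l_distr)

lemma additive_on_zero:
  assumes "f \<in> carrier R \<rightarrow> carrier R" and "additive_on R f"
  shows "f \<zero> = \<zero>"
proof -
  have "f \<zero> \<oplus> f \<zero> = f \<zero>"
    using assms(2) unfolding additive_on_def by (metis zero_closed r_zero)
  with assms(1) show ?thesis by (metis Pi_iff add.l_cancel_one' zero_closed)
qed

lemma additive_on_lsum: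
  "f \<in> carrier R \<rightarrow> carrier R \<Longrightarrow> additive_on R f \<Longrightarrow> (\<And>x. x \<in> set xs \<Longrightarrow> g x \<in> carrier R) \<Longrightarrow>
    f (lsum R (map g xs)) = lsum R (map (\<lambda>x. f (g x)) xs)"
  by (induction xs) (auto simp: additive_on_zero additive_on_def Pi_iff)

end

section \<open>Tensor products over an extension\<close>

locale ring_extension =
  fixes C :: "'c ring" and D :: "'d ring" and phi :: "'d \<Rightarrow> 'c"
  assumes C: "ring C" and phi: "phi \<in> carrier D \<rightarrow> carrier C"
begin

sublocale C: lsum_ring C by (rule lsum_ring.intro[OF C])

lemma phi_closed [simp]: "d \<in> carrier D \<Longrightarrow> phi d \<in> carrier C"
  using phi by auto

abbreviation "TEQ \<equiv> teq C D phi"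

lemma teq_addl: "\<lbrakk>x \<in> carrier C; x' \<in> carrier C; y \<in> carrier C\<rbrakk> \<Longrightarrow>
   TEQ [(x \<oplus>\<^bsub>C\<^esub> x', y)] [(x, y), (x', y)]"
  unfolding teq_def using trel.addl[of x C x' y D phi] by (simp add: algebra_simps)

lemma teq_addr: "\<lbrakk>x \<in> carrier C; y \<in> carrier C; y' \<in> carrier C\<rbrakk> \<Longrightarrow>
   TEQ [(x, y \<oplus>\<^bsub>C\<^esub> y')] [(x, y), (x, y')]"
  unfolding teq_def using trel.addr[of x C y y' D phi] by (simp add: algebra_simps)

lemma teq_bal: "\<lbrakk>x \<in> carrier C; d \<in> carrier D; y \<in> carrier C\<rbrakk> \<Longrightarrow>
   TEQ [(x \<otimes>\<^bsub>C\<^esub> phi d, y)] [(x, phi d \<otimes>\<^bsub>C\<^esub> y)]"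
  unfolding teq_def using trel.bal[of x C d D y phi] by (simp add: algebra_simps)

lemma teq_zero_r: "x \<in> carrier C \<Longrightarrow> TEQ [(x, \<zero>\<^bsub>C\<^esub>)] []"
proof -
  assume x: "x \<in> carrier C"
  have "TEQ [(x, \<zero>\<^bsub>C\<^esub>)] [(x, \<zero>\<^bsub>C\<^esub>), (x, \<zero>\<^bsub>C\<^esub>)]"
    using teq_addr[of x "\<zero>\<^bsub>C\<^esub>" "\<zero>\<^bsub>C\<^esub>"] x by simp
  then show ?thesis
    using teq_cancel[of C D phi "[]" "[(x, \<zero>\<^bsub>C\<^esub>)]" "[(x, \<zero>\<^bsub>C\<^esub>)]"]
    by (auto intro: teq_sym)
qed

lemma teq_zero_l: "y \<in> carrier C \<Longrightarrow> TEQ [(\<zero>\<^bsub>C\<^esub>, y)] []"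
proof -
  assume y: "y \<in> carrier C"
  have "TEQ [(\<zero>\<^bsub>C\<^esub>, y)] [(\<zero>\<^bsub>C\<^esub>, y), (\<zero>\<^bsub>C\<^esub>, y)]"
    using teq_addl[of "\<zero>\<^bsub>C\<^esub>" "\<zero>\<^bsub>C\<^esub>" y] y by simp
  then show ?thesis
    using teq_cancel[of C D phi "[]" "[(\<zero>\<^bsub>C\<^esub>, y)]" "[(\<zero>\<^bsub>C\<^esub>, y)]"]
    by (auto intro: teq_sym)
qed

lemma trel_eq_fsum_diff:
  assumes Q_mset: "\<And>xs ys. xs \<in> fsums C \<Longrightarrow> ys \<in> fsums C \<Longrightarrow> mset xs = mset ys \<Longrightarrow> Q xs ys"
    and Q_sym: "\<And>xs ys. Q xs ys \<Longrightarrow> Q ys xs"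
    and Q_app: "\<And>xs ys xs' ys'. Q xs ys \<Longrightarrow> Q xs' ys' \<Longrightarrow> Q (xs @ xs') (ys @ ys')"
    and Q_addl: "\<And>x x' y. \<lbrakk>x \<in> carrier C; x' \<in> carrier C; y \<in> carrier C\<rbrakk> \<Longrightarrow>
        Q [(x \<oplus>\<^bsub>C\<^esub> x', y)] [(x, y), (x', y)]"
    and Q_addr: "\<And>x y y'. \<lbrakk>x \<in> carrier C; y \<in> carrier C; y' \<in> carrier C\<rbrakk> \<Longrightarrow>
        Q [(x, y \<oplus>\<^bsub>C\<^esub> y')] [(x, y), (x, y')]"
    and Q_bal: "\<And>x d y. \<lbrakk>x \<in> carrier C; d \<in> carrier D; y \<in> carrier C\<rbrakk> \<Longrightarrow>
        Q [(x \<otimes>\<^bsub>C\<^esub> phi d, y)] [(x, phi d \<otimes>\<^bsub>C\<^esub> y)]"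
  shows "f \<in> trel C D phi \<Longrightarrow> \<exists>xs ys. xs \<in> fsums C \<and> ys \<in> fsums C \<and>
            f = fsum_of xs - fsum_of ys \<and> Q xs ys"
proof (induction f rule: trel.induct)
  case zero
  then show ?case by (intro exI[of _ "[]"]) (auto simp: zero_fun_def[symmetric] intro: Q_mset)
next
  case (addl x x' y)
  then show ?case
    by (intro exI[of _ "[(x \<oplus>\<^bsub>C\<^esub> x', y)]"] exI[of _ "[(x, y), (x', y)]"])
       (auto intro: Q_addl simp: algebra_simps)
next
  case (addr x y y')
  then show ?case
    by (intro exI[of _ "[(x, y \<oplus>\<^bsub>C\<^esub> y')]"] exI[of _ "[(x, y), (x, y')]"])
       (auto intro: Q_addr simp: algebra_simps)
next
  case (bal x d y)
  then show ?case
    by (intro exI[of _ "[(x \<otimes>\<^bsub>C\<^esub> phi d, y)]"] exI[of _ "[(x, phi d \<otimes>\<^bsub>C\<^esub> y)]"])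
       (auto intro: Q_bal simp: algebra_simps)
next
  case (diff f g)
  then obtain a b ga gb where h: "a \<in> fsums C" "b \<in> fsums C" "f = fsum_of a - fsum_of b" "Q a b"
     "ga \<in> fsums C" "gb \<in> fsums C" "g = fsum_of ga - fsum_of gb" "Q ga gb" by blast
  have "f - g = fsum_of (a @ gb) - fsum_of (b @ ga)" unfolding h(3,7) by (simp add: algebra_simps)
  moreover have "Q (a @ gb) (b @ ga)" using Q_app[OF h(4) Q_sym[OF h(8)]] .
  ultimately show ?case using h by (intro exI[of _ "a @ gb"] exI[of _ "b @ ga"]) auto
qed

lemma teq_induct:
  assumes Q_mset: "\<And>xs ys. xs \<in> fsums C \<Longrightarrow> ys \<in> fsums C \<Longrightarrow> mset xs = mset ys \<Longrightarrow> Q xs ys"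
    and Q_sym: "\<And>xs ys. Q xs ys \<Longrightarrow> Q ys xs"
    and Q_trans: "\<And>xs ys zs. Q xs ys \<Longrightarrow> Q ys zs \<Longrightarrow> Q xs zs"
    and Q_app: "\<And>xs ys xs' ys'. Q xs ys \<Longrightarrow> Q xs' ys' \<Longrightarrow> Q (xs @ xs') (ys @ ys')"
    and Q_cancel: "\<And>xs ys zs. xs \<in> fsums C \<Longrightarrow> ys \<in> fsums C \<Longrightarrow> zs \<in> fsums C \<Longrightarrow>
        Q (xs @ zs) (ys @ zs) \<Longrightarrow> Q xs ys"
    and Q_addl: "\<And>x x' y. \<lbrakk>x \<in> carrier C; x' \<in> carrier C; y \<in> carrier C\<rbrakk> \<Longrightarrow>
        Q [(x \<oplus>\<^bsub>C\<^esub> x', y)] [(x, y), (x', y)]"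
    and Q_addr: "\<And>x y y'. \<lbrakk>x \<in> carrier C; y \<in> carrier C; y' \<in> carrier C\<rbrakk> \<Longrightarrow>
        Q [(x, y \<oplus>\<^bsub>C\<^esub> y')] [(x, y), (x, y')]"
    and Q_bal: "\<And>x d y. \<lbrakk>x \<in> carrier C; d \<in> carrier D; y \<in> carrier C\<rbrakk> \<Longrightarrow>
        Q [(x \<otimes>\<^bsub>C\<^esub> phi d, y)] [(x, phi d \<otimes>\<^bsub>C\<^esub> y)]"
    and T: "TEQ xs ys" and xs: "xs \<in> fsums C" and ys: "ys \<in> fsums C"
  shows "Q xs ys"
proof -
  from T have "fsum_of xs - fsum_of ys \<in> trel C D phi" by (simp add: teq_def)
  from trel_eq_fsum_diff[OF Q_mset Q_sym Q_app Q_addl Q_addr Q_bal this]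
  obtain a b where h: "a \<in> fsums C" "b \<in> fsums C" "fsum_of xs - fsum_of ys = fsum_of a - fsum_of b" "Q a b"
    by blast
  have "fsum_of (xs @ b) = fsum_of (ys @ a)" using h(3) by (simp add: algebra_simps)
  then have "mset (xs @ b) = mset (ys @ a)" by (simp only: fsum_of_eq_iff)
  then have "Q (xs @ b) (ys @ a)" using h xs ys by (intro Q_mset) auto
  moreover have "Q (ys @ a) (ys @ b)" using Q_app[OF Q_mset[OF ys ys refl] h(4)] .
  ultimately have "Q (xs @ b) (ys @ b)" by (rule Q_trans)
  then show ?thesis using Q_cancel xs ys h by blast
qed

lemma fsums_lmul: "c \<in> carrier C \<Longrightarrow> xs \<in> fsums C \<Longrightarrow> lmul C c xs \<in> fsums C"
  unfolding lmul_def by (rule fsums_map) (force simp: fsums_def)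

lemma fsums_rmul: "c \<in> carrier C \<Longrightarrow> xs \<in> fsums C \<Longrightarrow> rmul C c xs \<in> fsums C"
  unfolding rmul_def by (rule fsums_map) (force simp: fsums_def)

lemma lsum_balanced_cong:
  assumes M: "ring M"
    and cl: "\<And>x y. x \<in> carrier C \<Longrightarrow> y \<in> carrier C \<Longrightarrow> \<beta> (x, y) \<in> carrier M"
    and bl: "\<And>x x' y. \<lbrakk>x \<in> carrier C; x' \<in> carrier C; y \<in> carrier C\<rbrakk> \<Longrightarrow>
        \<beta> (x \<oplus>\<^bsub>C\<^esub> x', y) = \<beta> (x, y) \<oplus>\<^bsub>M\<^esub> \<beta> (x', y)"
    and br: "\<And>x y y'. \<lbrakk>x \<in> carrier C; y \<in> carrier C; y' \<in> carrier C\<rbrakk> \<Longrightarrow>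
        \<beta> (x, y \<oplus>\<^bsub>C\<^esub> y') = \<beta> (x, y) \<oplus>\<^bsub>M\<^esub> \<beta> (x, y')"
    and bb: "\<And>x d y. \<lbrakk>x \<in> carrier C; d \<in> carrier D; y \<in> carrier C\<rbrakk> \<Longrightarrow>
        \<beta> (x \<otimes>\<^bsub>C\<^esub> phi d, y) = \<beta> (x, phi d \<otimes>\<^bsub>C\<^esub> y)"
    and T: "TEQ xs ys" and xs: "xs \<in> fsums C" and ys: "ys \<in> fsums C"
  shows "lsum M (map \<beta> xs) = lsum M (map \<beta> ys)"
proof -
  interpret M: lsum_ring M by (rule lsum_ring.intro[OF M])
  have cls: "\<And>zs. zs \<in> fsums C \<Longrightarrow> set (map \<beta> zs) \<subseteq> carrier M"
    using cl unfolding fsums_def by auto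
  let ?Q = "\<lambda>xs ys. xs \<in> fsums C \<and> ys \<in> fsums C \<and> lsum M (map \<beta> xs) = lsum M (map \<beta> ys)"
  have "?Q xs ys"
  proof (rule teq_induct[OF _ _ _ _ _ _ _ _ T xs ys])
    show "?Q xs ys" if "xs \<in> fsums C" "ys \<in> fsums C" "mset xs = mset ys" for xs ys
      using cls[OF that(1)] that by (intro conjI M.lsum_mset) simp_all
    show "?Q (xs @ xs') (ys @ ys')" if "?Q xs ys" "?Q xs' ys'" for xs ys xs' ys'
      using that cls by (simp add: M.lsum_append)
    show "?Q xs ys" if "xs \<in> fsums C" "ys \<in> fsums C" "zs \<in> fsums C" "?Q (xs @ zs) (ys @ zs)" for xs ys zs
      using that cls by (simp add: M.lsum_append)
    show "?Q [(x \<oplus>\<^bsub>C\<^esub> x', y)] [(x, y), (x', y)]" if "x \<in> carrier C" "x' \<in> carrier C" "y \<in> carrier C" for x x' y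
      using that bl cl by simp
    show "?Q [(x, y \<oplus>\<^bsub>C\<^esub> y')] [(x, y), (x, y')]" if "x \<in> carrier C" "y \<in> carrier C" "y' \<in> carrier C" for x y y'
      using that br cl by simp
    show "?Q [(x \<otimes>\<^bsub>C\<^esub> phi d, y)] [(x, phi d \<otimes>\<^bsub>C\<^esub> y)]" if "x \<in> carrier C" "d \<in> carrier D" "y \<in> carrier C" for x d y
      using that bb cl by simp
  qed auto
  then show ?thesis by simp
qed

lemma teq_map_cong:
  assumes cl: "\<And>p. p \<in> carrier C \<times> carrier C \<Longrightarrow> g p \<in> carrier C \<times> carrier C"
    and gl: "\<And>x x' y. \<lbrakk>x \<in> carrier C; x' \<in> carrier C; y \<in> carrier C\<rbrakk> \<Longrightarrow>
        TEQ (map g [(x \<oplus>\<^bsub>C\<^esub> x', y)]) (map g [(x, y), (x', y)])"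
    and gr: "\<And>x y y'. \<lbrakk>x \<in> carrier C; y \<in> carrier C; y' \<in> carrier C\<rbrakk> \<Longrightarrow>
        TEQ (map g [(x, y \<oplus>\<^bsub>C\<^esub> y')]) (map g [(x, y), (x, y')])"
    and gb: "\<And>x d y. \<lbrakk>x \<in> carrier C; d \<in> carrier D; y \<in> carrier C\<rbrakk> \<Longrightarrow>
        TEQ (map g [(x \<otimes>\<^bsub>C\<^esub> phi d, y)]) (map g [(x, phi d \<otimes>\<^bsub>C\<^esub> y)])"
    and T: "TEQ xs ys" and xs: "xs \<in> fsums C" and ys: "ys \<in> fsums C"
  shows "TEQ (map g xs) (map g ys)"
proof -
  let ?Q = "\<lambda>xs ys. xs \<in> fsums C \<and> ys \<in> fsums C \<and> TEQ (map g xs) (map g ys)"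
  have "?Q xs ys"
  proof (rule teq_induct[OF _ _ _ _ _ _ _ _ T xs ys])
    show "?Q xs ys" if "xs \<in> fsums C" "ys \<in> fsums C" "mset xs = mset ys" for xs ys
      using that by (auto intro!: teq_mset)
    show "?Q (xs @ xs') (ys @ ys')" if "?Q xs ys" "?Q xs' ys'" for xs ys xs' ys'
      using that by (simp add: teq_append)
    show "?Q xs ys" if "xs \<in> fsums C" "ys \<in> fsums C" "zs \<in> fsums C" "?Q (xs @ zs) (ys @ zs)" for xs ys zs
      using that by (simp add: teq_cancel[of C D phi "map g xs" "map g zs" "map g ys"])
    show "?Q [(x \<oplus>\<^bsub>C\<^esub> x', y)] [(x, y), (x', y)]" if "x \<in> carrier C" "x' \<in> carrier C" "y \<in> carrier C" for x x' y
      using that gl[OF that] by simp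
    show "?Q [(x, y \<oplus>\<^bsub>C\<^esub> y')] [(x, y), (x, y')]" if "x \<in> carrier C" "y \<in> carrier C" "y' \<in> carrier C" for x y y'
      using that gr[OF that] by simp
    show "?Q [(x \<otimes>\<^bsub>C\<^esub> phi d, y)] [(x, phi d \<otimes>\<^bsub>C\<^esub> y)]" if "x \<in> carrier C" "d \<in> carrier D" "y \<in> carrier C" for x d y
      using that gb[OF that] by simp
  qed (auto intro: teq_sym teq_trans)
  then show ?thesis by simp
qed

lemma teq_lmul: "c \<in> carrier C \<Longrightarrow> TEQ xs ys \<Longrightarrow> xs \<in> fsums C \<Longrightarrow> ys \<in> fsums C \<Longrightarrow>
    TEQ (lmul C c xs) (lmul C c ys)"
  unfolding lmul_def
proof (rule teq_map_cong)
  fix x d y assume h: "c \<in> carrier C" "x \<in> carrier C" "d \<in> carrier D" "y \<in> carrier C"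
  then show "TEQ (map (\<lambda>(x, y). (c \<otimes>\<^bsub>C\<^esub> x, y)) [(x \<otimes>\<^bsub>C\<^esub> phi d, y)])
     (map (\<lambda>(x, y). (c \<otimes>\<^bsub>C\<^esub> x, y)) [(x, phi d \<otimes>\<^bsub>C\<^esub> y)])"
    using teq_bal[of "c \<otimes>\<^bsub>C\<^esub> x" d y] by (simp add: C.m_assoc)
qed (auto simp: C.r_distr intro: teq_addl teq_addr)

lemma teq_rmul: "c \<in> carrier C \<Longrightarrow> TEQ xs ys \<Longrightarrow> xs \<in> fsums C \<Longrightarrow> ys \<in> fsums C \<Longrightarrow>
    TEQ (rmul C c xs) (rmul C c ys)"
  unfolding rmul_def
  by (rule teq_map_cong) (auto simp: C.l_distr C.m_assoc intro: teq_addl teq_addr teq_bal)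

lemma tlift_lmul: "c \<in> carrier C \<Longrightarrow> xs \<in> fsums C \<Longrightarrow>
    tlift C D phi (lmul C c) (tcls C D phi xs) = tcls C D phi (lmul C c xs)"
  by (rule tlift_tcls) (auto intro: teq_lmul)

lemma tlift_rmul: "c \<in> carrier C \<Longrightarrow> xs \<in> fsums C \<Longrightarrow>
    tlift C D phi (rmul C c) (tcls C D phi xs) = tcls C D phi (rmul C c xs)"
  by (rule tlift_tcls) (auto intro: teq_rmul)

lemma teq_rmul_add: "a \<in> carrier C \<Longrightarrow> b \<in> carrier C \<Longrightarrow> xs \<in> fsums C \<Longrightarrow>
    TEQ (rmul C (a \<oplus>\<^bsub>C\<^esub> b) xs) (rmul C a xs @ rmul C b xs)"
proof (induction xs)
  case Nil
  then show ?case by (simp add: rmul_def teq_refl)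
next
  case (Cons p xs)
  obtain x y where p: "p = (x, y)" by fastforce
  have "TEQ ([(x, y \<otimes>\<^bsub>C\<^esub> (a \<oplus>\<^bsub>C\<^esub> b))] @ rmul C (a \<oplus>\<^bsub>C\<^esub> b) xs)
       ([(x, y \<otimes>\<^bsub>C\<^esub> a), (x, y \<otimes>\<^bsub>C\<^esub> b)] @ (rmul C a xs @ rmul C b xs))"
    using Cons p by (intro teq_append) (auto simp: C.r_distr intro: teq_addr)
  also have "TEQ \<dots> (rmul C a (p # xs) @ rmul C b (p # xs))"
    by (rule teq_mset) (simp add: rmul_def p)
  finally show ?case by (simp add: rmul_def p)
qed

lemma teq_rmul_zero: "xs \<in> fsums C \<Longrightarrow> TEQ (rmul C \<zero>\<^bsub>C\<^esub> xs) []"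
proof (induction xs)
  case Nil
  then show ?case by (simp add: rmul_def teq_refl)
next
  case (Cons p xs)
  obtain x y where p: "p = (x, y)" by fastforce
  have "TEQ ([(x, \<zero>\<^bsub>C\<^esub>)] @ rmul C \<zero>\<^bsub>C\<^esub> xs) ([] @ [])"
    using Cons p by (intro teq_append teq_zero_r) auto
  moreover have "rmul C \<zero>\<^bsub>C\<^esub> (p # xs) = [(x, \<zero>\<^bsub>C\<^esub>)] @ rmul C \<zero>\<^bsub>C\<^esub> xs"
    using Cons.prems p by (simp add: rmul_def)
  ultimately show ?case by simp
qed

lemma teq_lsum_right: "x \<in> carrier C \<Longrightarrow> set ys \<subseteq> carrier C \<Longrightarrow>
    TEQ [(x, lsum C ys)] (map (\<lambda>y. (x, y)) ys)"
proof (induction ys)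
  case Nil
  then show ?case by (simp add: teq_zero_r)
next
  case (Cons y ys)
  have "TEQ [(x, y \<oplus>\<^bsub>C\<^esub> lsum C ys)] ([(x, y)] @ [(x, lsum C ys)])"
    using Cons.prems by (simp add: teq_addr)
  also have "TEQ \<dots> ([(x, y)] @ map (\<lambda>y. (x, y)) ys)"
    using Cons by (intro teq_append teq_refl) auto
  finally show ?case by simp
qed

lemma teq_map_Nil: "(\<And>i. i \<in> set is \<Longrightarrow> TEQ [f i] []) \<Longrightarrow> TEQ (map f is) []"
proof (induction "is")
  case Nil
  then show ?case by (simp add: teq_refl)
next
  case (Cons a "is")
  then show ?case using teq_append[of C D phi "[f a]" "[]" "map f is" "[]"] by simp
qed

lemma teq_map_add_left: "(\<And>i. i \<in> set is \<Longrightarrow> a i \<in> carrier C \<and> b i \<in> carrier C \<and> g i \<in> carrier C) \<Longrightarrow>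
    TEQ (map (\<lambda>i. (a i \<oplus>\<^bsub>C\<^esub> b i, g i)) is) (map (\<lambda>i. (a i, g i)) is @ map (\<lambda>i. (b i, g i)) is)"
proof (induction "is")
  case Nil
  then show ?case by (simp add: teq_refl)
next
  case (Cons j "is")
  have "TEQ ([(a j \<oplus>\<^bsub>C\<^esub> b j, g j)] @ map (\<lambda>i. (a i \<oplus>\<^bsub>C\<^esub> b i, g i)) is)
     ([(a j, g j), (b j, g j)] @ (map (\<lambda>i. (a i, g i)) is @ map (\<lambda>i. (b i, g i)) is))"
    using Cons by (intro teq_append teq_addl) auto
  also have "TEQ \<dots> (map (\<lambda>i. (a i, g i)) (j # is) @ map (\<lambda>i. (b i, g i)) (j # is))"
    by (rule teq_mset) simp
  finally show ?case by simp
qed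

end

lemma left_D2I:
  assumes "iota \<in> tens C D phi \<rightarrow> cvec C n" "pi \<in> cvec C n \<rightarrow> tens C D phi"
    "\<And>X Y. X\<in>tens C D phi \<Longrightarrow> Y\<in>tens C D phi \<Longrightarrow> iota (tadd C D phi X Y) = vadd C n (iota X) (iota Y)"
    "\<And>X d. X\<in>tens C D phi \<Longrightarrow> d\<in>carrier D \<Longrightarrow> iota (tlift C D phi (lmul C (phi d)) X) = vlmul C n (phi d) (iota X)"
    "\<And>X c. X\<in>tens C D phi \<Longrightarrow> c\<in>carrier C \<Longrightarrow> iota (tlift C D phi (rmul C c) X) = vrmul C n c (iota X)"
    "\<And>v w. v\<in>cvec C n \<Longrightarrow> w\<in>cvec C n \<Longrightarrow> pi (vadd C n v w) = tadd C D phi (pi v) (pi w)"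
    "\<And>v d. v\<in>cvec C n \<Longrightarrow> d\<in>carrier D \<Longrightarrow> pi (vlmul C n (phi d) v) = tlift C D phi (lmul C (phi d)) (pi v)"
    "\<And>v c. v\<in>cvec C n \<Longrightarrow> c\<in>carrier C \<Longrightarrow> pi (vrmul C n c v) = tlift C D phi (rmul C c) (pi v)"
    "\<And>X. X\<in>tens C D phi \<Longrightarrow> pi (iota X) = X"
  shows "left_D2 C D phi"
  unfolding left_D2_def
proof (intro exI conjI ballI)
  show "iota \<in> tens C D phi \<rightarrow> cvec C n" by fact
qed (fact | rule assms, assumption+)+

section \<open>A left D2 quasibase makes an extension left D2\<close>

context ring_extension
begin

context
  fixes m beta t
  assumes qb: "left_D2_qb C D phi m beta t"
begin

lemma qb_beta: "i < m \<Longrightarrow> beta i \<in> bend C D phi"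
  using qb by (simp add: left_D2_qb_def)

lemma qb_t: "i < m \<Longrightarrow> t i \<in> tcent C D phi"
  using qb by (simp add: left_D2_qb_def)

lemma qb_t_fsums: "i < m \<Longrightarrow> t i \<in> fsums C"
  using qb_t by (simp add: tcent_def)

lemma beta_closed: "i < m \<Longrightarrow> x \<in> carrier C \<Longrightarrow> beta i x \<in> carrier C"
  using qb_beta by (auto simp: bend_def lend_def Pi_iff)

lemma beta_add: "i < m \<Longrightarrow> x \<in> carrier C \<Longrightarrow> y \<in> carrier C \<Longrightarrow>
    beta i (x \<oplus>\<^bsub>C\<^esub> y) = beta i x \<oplus>\<^bsub>C\<^esub> beta i y"
  using qb_beta by (auto simp: bend_def lend_def additive_on_def)

lemma beta_left: "i < m \<Longrightarrow> d \<in> carrier D \<Longrightarrow> x \<in> carrier C \<Longrightarrow>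
    beta i (phi d \<otimes>\<^bsub>C\<^esub> x) = phi d \<otimes>\<^bsub>C\<^esub> beta i x"
  using qb_beta by (auto simp: bend_def lend_def)

lemma beta_right: "i < m \<Longrightarrow> d \<in> carrier D \<Longrightarrow> x \<in> carrier C \<Longrightarrow>
    beta i (x \<otimes>\<^bsub>C\<^esub> phi d) = beta i x \<otimes>\<^bsub>C\<^esub> phi d"
  using qb_beta by (auto simp: bend_def lend_def)

definition qb_proj :: "nat \<Rightarrow> ('c \<times> 'c) list \<Rightarrow> 'c" where
  "qb_proj i xs = lsum C (map (\<lambda>(x, y). beta i x \<otimes>\<^bsub>C\<^esub> y) xs)"

lemma qb_proj_closed: "i < m \<Longrightarrow> xs \<in> fsums C \<Longrightarrow> qb_proj i xs \<in> carrier C"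
  unfolding qb_proj_def by (rule C.lsum_map_closed) (auto simp: fsums_def beta_closed)

lemma qb_proj_Nil [simp]: "qb_proj i [] = \<zero>\<^bsub>C\<^esub>"
  by (simp add: qb_proj_def)

lemma qb_proj_Cons [simp]: "qb_proj i ((x, y) # xs) = beta i x \<otimes>\<^bsub>C\<^esub> y \<oplus>\<^bsub>C\<^esub> qb_proj i xs"
  by (simp add: qb_proj_def)

lemma qb_proj_append: "i < m \<Longrightarrow> xs \<in> fsums C \<Longrightarrow> ys \<in> fsums C \<Longrightarrow> qb_proj i (xs @ ys) = qb_proj i xs \<oplus>\<^bsub>C\<^esub> qb_proj i ys"
  unfolding qb_proj_def by (subst map_append, rule C.lsum_append) (auto simp: fsums_def beta_closed)

lemma qb_proj_teq: "i < m \<Longrightarrow> TEQ xs ys \<Longrightarrow> xs \<in> fsums C \<Longrightarrow> ys \<in> fsums C \<Longrightarrow> qb_proj i xs = qb_proj i ys"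
  unfolding qb_proj_def
  by (rule lsum_balanced_cong[OF C])
     (auto simp: beta_closed beta_add beta_right C.l_distr C.r_distr C.m_assoc)

lemma qb_proj_lmul: "i < m \<Longrightarrow> d \<in> carrier D \<Longrightarrow> xs \<in> fsums C \<Longrightarrow>
    qb_proj i (lmul C (phi d) xs) = phi d \<otimes>\<^bsub>C\<^esub> qb_proj i xs"
proof (induction xs)
  case (Cons p xs)
  obtain x y where p: "p = (x, y)" by fastforce
  have c: "x \<in> carrier C" "y \<in> carrier C" "xs \<in> fsums C" using Cons.prems p by auto
  have "qb_proj i (lmul C (phi d) (p # xs)) = beta i (phi d \<otimes>\<^bsub>C\<^esub> x) \<otimes>\<^bsub>C\<^esub> y \<oplus>\<^bsub>C\<^esub> qb_proj i (lmul C (phi d) xs)"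
    by (simp add: lmul_def p)
  also have "\<dots> = phi d \<otimes>\<^bsub>C\<^esub> (beta i x \<otimes>\<^bsub>C\<^esub> y) \<oplus>\<^bsub>C\<^esub> phi d \<otimes>\<^bsub>C\<^esub> qb_proj i xs"
    using Cons c by (simp add: beta_left beta_closed C.m_assoc)
  also have "\<dots> = phi d \<otimes>\<^bsub>C\<^esub> qb_proj i (p # xs)"
    using Cons c by (simp add: p C.r_distr beta_closed qb_proj_closed)
  finally show ?case .
qed (simp add: lmul_def)

lemma qb_proj_rmul: "i < m \<Longrightarrow> c \<in> carrier C \<Longrightarrow> xs \<in> fsums C \<Longrightarrow>
    qb_proj i (rmul C c xs) = qb_proj i xs \<otimes>\<^bsub>C\<^esub> c"
proof (induction xs)
  case (Cons p xs)
  obtain x y where p: "p = (x, y)" by fastforce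
  have c: "x \<in> carrier C" "y \<in> carrier C" "xs \<in> fsums C" using Cons.prems p by auto
  have "qb_proj i (rmul C c (p # xs)) = beta i x \<otimes>\<^bsub>C\<^esub> (y \<otimes>\<^bsub>C\<^esub> c) \<oplus>\<^bsub>C\<^esub> qb_proj i (rmul C c xs)"
    by (simp add: rmul_def p)
  also have "\<dots> = (beta i x \<otimes>\<^bsub>C\<^esub> y) \<otimes>\<^bsub>C\<^esub> c \<oplus>\<^bsub>C\<^esub> qb_proj i xs \<otimes>\<^bsub>C\<^esub> c"
    using Cons c by (simp add: beta_closed C.m_assoc)
  also have "\<dots> = qb_proj i (p # xs) \<otimes>\<^bsub>C\<^esub> c"
    using Cons c by (simp add: p C.l_distr beta_closed qb_proj_closed)
  finally show ?case .
qed (simp add: rmul_def)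

definition qb_embed :: "('c \<times> 'c) list set \<Rightarrow> nat \<Rightarrow> 'c" where
  "qb_embed X = (\<lambda>i\<in>{..<m}. qb_proj i (SOME xs. xs \<in> X))"

definition qb_comb :: "(nat \<Rightarrow> 'c) \<Rightarrow> ('c \<times> 'c) list" where
  "qb_comb v = concat (map (\<lambda>i. rmul C (v i) (t i)) [0..<m])"

definition qb_retract :: "(nat \<Rightarrow> 'c) \<Rightarrow> ('c \<times> 'c) list set" where
  "qb_retract v = tcls C D phi (qb_comb v)"

lemma qb_embed_tcls: "xs \<in> fsums C \<Longrightarrow> qb_embed (tcls C D phi xs) = (\<lambda>i\<in>{..<m}. qb_proj i xs)"
proof -
  assume xs: "xs \<in> fsums C"
  let ?s = "SOME ys. ys \<in> tcls C D phi xs"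
  have "?s \<in> tcls C D phi xs" by (rule some_in_tcls[OF xs])
  then have "?s \<in> fsums C" "TEQ xs ?s" by (auto simp: mem_tcls)
  then show ?thesis unfolding qb_embed_def using xs by (intro restrict_ext) (simp add: qb_proj_teq)
qed

lemma qb_comb_cong: "(\<And>i. i < m \<Longrightarrow> v i = w i) \<Longrightarrow> qb_comb v = qb_comb w"
  unfolding qb_comb_def by (intro arg_cong[where f = concat] map_cong) auto

lemma qb_comb_fsums: "(\<And>i. i < m \<Longrightarrow> v i \<in> carrier C) \<Longrightarrow> qb_comb v \<in> fsums C"
  unfolding qb_comb_def by (auto intro!: fsums_rmul qb_t_fsums)

lemma qb_comb_vadd: "(\<And>i. i < m \<Longrightarrow> v i \<in> carrier C) \<Longrightarrow> (\<And>i. i < m \<Longrightarrow> w i \<in> carrier C) \<Longrightarrow>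
    TEQ (qb_comb (\<lambda>i. v i \<oplus>\<^bsub>C\<^esub> w i)) (qb_comb v @ qb_comb w)"
proof -
  assume v: "\<And>i. i < m \<Longrightarrow> v i \<in> carrier C" and w: "\<And>i. i < m \<Longrightarrow> w i \<in> carrier C"
  have "TEQ (qb_comb (\<lambda>i. v i \<oplus>\<^bsub>C\<^esub> w i)) (concat (map (\<lambda>i. rmul C (v i) (t i) @ rmul C (w i) (t i)) [0..<m]))"
    unfolding qb_comb_def by (rule teq_concat) (auto intro!: teq_rmul_add v w qb_t_fsums)
  also have "TEQ \<dots> (qb_comb v @ qb_comb w)"
    unfolding qb_comb_def by (rule teq_mset, rule mset_concat_map_append)
  finally show ?thesis .
qed

lemma qb_comb_lmul: "d \<in> carrier D \<Longrightarrow> (\<And>i. i < m \<Longrightarrow> v i \<in> carrier C) \<Longrightarrow>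
    TEQ (qb_comb (\<lambda>i. phi d \<otimes>\<^bsub>C\<^esub> v i)) (lmul C (phi d) (qb_comb v))"
proof -
  assume d: "d \<in> carrier D" and v: "\<And>i. i < m \<Longrightarrow> v i \<in> carrier C"
  have eq1: "rmul C (phi d \<otimes>\<^bsub>C\<^esub> v i) (t i) = rmul C (v i) (rmul C (phi d) (t i))" if "i < m" for i
    using qb_t_fsums[OF that] v[OF that] d
    unfolding rmul_def by (auto simp: C.m_assoc fsums_def)
  have eq2: "lmul C (phi d) (rmul C (v i) (t i)) = rmul C (v i) (lmul C (phi d) (t i))" for i
    unfolding rmul_def lmul_def by (simp add: case_prod_beta)
  have "TEQ (qb_comb (\<lambda>i. phi d \<otimes>\<^bsub>C\<^esub> v i)) (concat (map (\<lambda>i. rmul C (v i) (lmul C (phi d) (t i))) [0..<m]))"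
    unfolding qb_comb_def
  proof (rule teq_concat)
    fix i assume "i \<in> set [0..<m]"
    then have i: "i < m" by simp
    have h: "TEQ (lmul C (phi d) (t i)) (rmul C (phi d) (t i))"
      using qb_t[OF i] d by (simp add: tcent_def)
    have h2: "TEQ (rmul C (v i) (lmul C (phi d) (t i))) (rmul C (v i) (rmul C (phi d) (t i)))"
      by (rule teq_rmul[OF _ h]) (use i d v in \<open>auto intro!: fsums_lmul fsums_rmul qb_t_fsums\<close>)
    show "TEQ (rmul C (phi d \<otimes>\<^bsub>C\<^esub> v i) (t i)) (rmul C (v i) (lmul C (phi d) (t i)))"
      unfolding eq1[OF i] by (rule teq_sym[OF h2])
  qed
  also have "\<dots> = lmul C (phi d) (qb_comb v)"
    unfolding qb_comb_def lmul_concat by (simp add: eq2 comp_def)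
  finally show ?thesis .
qed

lemma qb_comb_rmul: "c \<in> carrier C \<Longrightarrow> (\<And>i. i < m \<Longrightarrow> v i \<in> carrier C) \<Longrightarrow>
    qb_comb (\<lambda>i. v i \<otimes>\<^bsub>C\<^esub> c) = rmul C c (qb_comb v)"
proof -
  assume c: "c \<in> carrier C" and v: "\<And>i. i < m \<Longrightarrow> v i \<in> carrier C"
  have "rmul C (v i \<otimes>\<^bsub>C\<^esub> c) (t i) = rmul C c (rmul C (v i) (t i))" if "i < m" for i
    using qb_t_fsums[OF that] v[OF that] c
    unfolding rmul_def by (auto simp: C.m_assoc fsums_def)
  then show ?thesis unfolding qb_comb_def rmul_concat
    by (intro arg_cong[where f = concat]) auto
qed

lemma qb_comb_zero: "TEQ (qb_comb (\<lambda>i. \<zero>\<^bsub>C\<^esub>)) []"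
proof -
  have "TEQ (qb_comb (\<lambda>i. \<zero>\<^bsub>C\<^esub>)) (concat (map (\<lambda>i. []) [0..<m]))"
    unfolding qb_comb_def by (rule teq_concat) (auto intro: teq_rmul_zero qb_t_fsums)
  moreover have "concat (map (\<lambda>i. []) [0..<m]) = ([] :: ('c \<times> 'c) list)" by (induction m) auto
  ultimately show ?thesis by simp
qed

lemma qb_comb_simple:
  assumes x: "x \<in> carrier C" and y: "y \<in> carrier C"
  shows "TEQ [(x, y)] (qb_comb (\<lambda>i. beta i x \<otimes>\<^bsub>C\<^esub> y))"
proof -
  have "TEQ [(x, y)] (concat (map (\<lambda>i. map (\<lambda>(p, q). (p, q \<otimes>\<^bsub>C\<^esub> beta i x \<otimes>\<^bsub>C\<^esub> y)) (t i)) [0..<m]))"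
    using qb x y by (simp add: left_D2_qb_def)
  also have "concat (map (\<lambda>i. map (\<lambda>(p, q). (p, q \<otimes>\<^bsub>C\<^esub> beta i x \<otimes>\<^bsub>C\<^esub> y)) (t i)) [0..<m])
      = qb_comb (\<lambda>i. beta i x \<otimes>\<^bsub>C\<^esub> y)"
    unfolding qb_comb_def rmul_def
  proof (intro arg_cong[where f = concat] map_cong refl)
    fix i pq assume i: "i \<in> set [0..<m]" and pq: "pq \<in> set (t i)"
    obtain a b where ab: "pq = (a, b)" by fastforce
    have "b \<in> carrier C" using qb_t_fsums[of i] i pq ab by (auto simp: fsums_def)
    then show "(case pq of (p, q) \<Rightarrow> (p, q \<otimes>\<^bsub>C\<^esub> beta i x \<otimes>\<^bsub>C\<^esub> y)) =
        (case pq of (u, w) \<Rightarrow> (u, w \<otimes>\<^bsub>C\<^esub> (beta i x \<otimes>\<^bsub>C\<^esub> y)))"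
      using ab i x y beta_closed by (simp add: C.m_assoc)
  qed
  finally show ?thesis .
qed

lemma qb_comb_proj: "xs \<in> fsums C \<Longrightarrow> TEQ xs (qb_comb (\<lambda>i. qb_proj i xs))"
proof (induction xs)
  case Nil
  then show ?case using qb_comb_zero by (simp add: teq_sym)
next
  case (Cons p xs)
  obtain x y where p: "p = (x, y)" by fastforce
  have c: "x \<in> carrier C" "y \<in> carrier C" "xs \<in> fsums C" using Cons.prems p by auto
  have "TEQ ([(x, y)] @ xs) (qb_comb (\<lambda>i. beta i x \<otimes>\<^bsub>C\<^esub> y) @ qb_comb (\<lambda>i. qb_proj i xs))"
    using qb_comb_simple[OF c(1,2)] Cons.IH[OF c(3)] by (rule teq_append)
  also have "TEQ \<dots> (qb_comb (\<lambda>i. beta i x \<otimes>\<^bsub>C\<^esub> y \<oplus>\<^bsub>C\<^esub> qb_proj i xs))"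
    using c by (intro teq_sym[OF qb_comb_vadd]) (auto simp: beta_closed qb_proj_closed)
  finally show ?case by (simp add: p)
qed

lemma qb_embed_fun: "qb_embed \<in> tens C D phi \<rightarrow> cvec C m"
proof
  fix X assume "X \<in> tens C D phi"
  then obtain xs where xs: "xs \<in> fsums C" "X = tcls C D phi xs" by (auto elim!: tensE)
  show "qb_embed X \<in> cvec C m" unfolding cvec_def xs(2) qb_embed_tcls[OF xs(1)]
    using xs(1) by (simp add: restrict_PiE_iff qb_proj_closed)
qed

lemma qb_retract_fun: "qb_retract \<in> cvec C m \<rightarrow> tens C D phi"
  unfolding qb_retract_def by (auto intro!: tcls_in_tens qb_comb_fsums cvecD)

lemma qb_embed_tadd: "X \<in> tens C D phi \<Longrightarrow> Y \<in> tens C D phi \<Longrightarrow>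
    qb_embed (tadd C D phi X Y) = vadd C m (qb_embed X) (qb_embed Y)"
proof -
  assume X: "X \<in> tens C D phi" and Y: "Y \<in> tens C D phi"
  then obtain xs ys where xs: "xs \<in> fsums C" "X = tcls C D phi xs"
     and ys: "ys \<in> fsums C" "Y = tcls C D phi ys" by (auto elim!: tensE)
  have "qb_embed (tadd C D phi X Y) = (\<lambda>i\<in>{..<m}. qb_proj i (xs @ ys))"
    unfolding xs(2) ys(2) tadd_tcls[OF xs(1) ys(1)] by (rule qb_embed_tcls) (simp add: xs ys)
  also have "\<dots> = vadd C m (qb_embed X) (qb_embed Y)"
    unfolding vadd_def xs(2) ys(2) qb_embed_tcls[OF xs(1)] qb_embed_tcls[OF ys(1)]
    by (intro restrict_ext) (simp add: qb_proj_append xs ys)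
  finally show ?thesis .
qed

lemma qb_embed_lmul: "X \<in> tens C D phi \<Longrightarrow> d \<in> carrier D \<Longrightarrow>
    qb_embed (tlift C D phi (lmul C (phi d)) X) = vlmul C m (phi d) (qb_embed X)"
proof -
  assume X: "X \<in> tens C D phi" and d: "d \<in> carrier D"
  then obtain xs where xs: "xs \<in> fsums C" "X = tcls C D phi xs" by (auto elim!: tensE)
  have "qb_embed (tlift C D phi (lmul C (phi d)) X) = (\<lambda>i\<in>{..<m}. qb_proj i (lmul C (phi d) xs))"
    unfolding xs(2) tlift_lmul[OF phi_closed[OF d] xs(1)]
    by (rule qb_embed_tcls) (simp add: xs d fsums_lmul)
  also have "\<dots> = vlmul C m (phi d) (qb_embed X)"
    unfolding vlmul_def xs(2) qb_embed_tcls[OF xs(1)]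
    by (intro restrict_ext) (simp add: qb_proj_lmul xs d)
  finally show ?thesis .
qed

lemma qb_embed_rmul: "X \<in> tens C D phi \<Longrightarrow> c \<in> carrier C \<Longrightarrow>
    qb_embed (tlift C D phi (rmul C c) X) = vrmul C m c (qb_embed X)"
proof -
  assume X: "X \<in> tens C D phi" and c: "c \<in> carrier C"
  then obtain xs where xs: "xs \<in> fsums C" "X = tcls C D phi xs" by (auto elim!: tensE)
  have "qb_embed (tlift C D phi (rmul C c) X) = (\<lambda>i\<in>{..<m}. qb_proj i (rmul C c xs))"
    unfolding xs(2) tlift_rmul[OF c xs(1)]
    by (rule qb_embed_tcls) (simp add: xs c fsums_rmul)
  also have "\<dots> = vrmul C m c (qb_embed X)"
    unfolding vrmul_def xs(2) qb_embed_tcls[OF xs(1)]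
    by (intro restrict_ext) (simp add: qb_proj_rmul xs c)
  finally show ?thesis .
qed

lemma qb_retract_vadd: "v \<in> cvec C m \<Longrightarrow> w \<in> cvec C m \<Longrightarrow>
    qb_retract (vadd C m v w) = tadd C D phi (qb_retract v) (qb_retract w)"
proof -
  assume v: "v \<in> cvec C m" and w: "w \<in> cvec C m"
  have vc: "\<And>i. i < m \<Longrightarrow> v i \<in> carrier C" "\<And>i. i < m \<Longrightarrow> w i \<in> carrier C"
    using v w by (auto simp: cvecD)
  have e1: "qb_comb (vadd C m v w) = qb_comb (\<lambda>i. v i \<oplus>\<^bsub>C\<^esub> w i)" by (rule qb_comb_cong) (simp add: vadd_def)
  have e2: "TEQ (qb_comb (\<lambda>i. v i \<oplus>\<^bsub>C\<^esub> w i)) (qb_comb v @ qb_comb w)" by (rule qb_comb_vadd) (use vc in auto)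
  have "tcls C D phi (qb_comb (vadd C m v w)) = tcls C D phi (qb_comb v @ qb_comb w)"
    unfolding e1 by (rule tcls_eq[OF e2])
  moreover have "tadd C D phi (tcls C D phi (qb_comb v)) (tcls C D phi (qb_comb w)) = tcls C D phi (qb_comb v @ qb_comb w)"
    by (rule tadd_tcls; rule qb_comb_fsums; use vc in simp)
  ultimately show ?thesis unfolding qb_retract_def by simp
qed

lemma qb_retract_vlmul: "v \<in> cvec C m \<Longrightarrow> d \<in> carrier D \<Longrightarrow>
    qb_retract (vlmul C m (phi d) v) = tlift C D phi (lmul C (phi d)) (qb_retract v)"
proof -
  assume v: "v \<in> cvec C m" and d: "d \<in> carrier D"
  have vc: "\<And>i. i < m \<Longrightarrow> v i \<in> carrier C" using v by (auto simp: cvecD)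
  have e1: "qb_comb (vlmul C m (phi d) v) = qb_comb (\<lambda>i. phi d \<otimes>\<^bsub>C\<^esub> v i)" by (rule qb_comb_cong) (simp add: vlmul_def)
  have e2: "TEQ (qb_comb (\<lambda>i. phi d \<otimes>\<^bsub>C\<^esub> v i)) (lmul C (phi d) (qb_comb v))" by (rule qb_comb_lmul) (use vc d in auto)
  have "tcls C D phi (qb_comb (vlmul C m (phi d) v)) = tcls C D phi (lmul C (phi d) (qb_comb v))"
    unfolding e1 by (rule tcls_eq[OF e2])
  then show ?thesis
    using tlift_lmul[OF phi_closed[OF d] qb_comb_fsums[OF vc]] by (simp add: qb_retract_def)
qed

lemma qb_retract_vrmul: "v \<in> cvec C m \<Longrightarrow> c \<in> carrier C \<Longrightarrow>
    qb_retract (vrmul C m c v) = tlift C D phi (rmul C c) (qb_retract v)"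
proof -
  assume v: "v \<in> cvec C m" and c: "c \<in> carrier C"
  have vc: "\<And>i. i < m \<Longrightarrow> v i \<in> carrier C" using v by (auto simp: cvecD)
  have "qb_comb (vrmul C m c v) = qb_comb (\<lambda>i. v i \<otimes>\<^bsub>C\<^esub> c)" by (rule qb_comb_cong) (simp add: vrmul_def)
  also have "\<dots> = rmul C c (qb_comb v)" by (rule qb_comb_rmul) (use vc c in auto)
  finally show ?thesis
    using tlift_rmul[OF c qb_comb_fsums[OF vc]] by (simp add: qb_retract_def)
qed

lemma qb_retract_embed: "X \<in> tens C D phi \<Longrightarrow> qb_retract (qb_embed X) = X"
proof -
  assume X: "X \<in> tens C D phi"
  then obtain xs where xs: "xs \<in> fsums C" "X = tcls C D phi xs" by (auto elim!: tensE)
  have "qb_comb (qb_embed X) = qb_comb (\<lambda>i. qb_proj i xs)" by (rule qb_comb_cong) (simp add: xs qb_embed_tcls)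
  then have "qb_retract (qb_embed X) = tcls C D phi (qb_comb (\<lambda>i. qb_proj i xs))" unfolding qb_retract_def by simp
  also have "\<dots> = tcls C D phi xs" using tcls_eq[OF qb_comb_proj[OF xs(1)]] by simp
  finally show ?thesis using xs(2) by simp
qed

lemma left_D2_if_left_D2_qb: "left_D2 C D phi"
  by (rule left_D2I[OF qb_embed_fun qb_retract_fun qb_embed_tadd qb_embed_lmul qb_embed_rmul
        qb_retract_vadd qb_retract_vlmul qb_retract_vrmul qb_retract_embed])

end

end

section \<open>A right D2 extension has a right D2 quasibase\<close>

context ring_extension
begin

context
  fixes n iota pi
  assumes iota: "iota \<in> tens C D phi \<rightarrow> cvec C n"
    and pi: "pi \<in> cvec C n \<rightarrow> tens C D phi"
    and iota_tadd: "\<forall>X\<in>tens C D phi. \<forall>Y\<in>tens C D phi.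
      iota (tadd C D phi X Y) = vadd C n (iota X) (iota Y)"
    and iota_lmul: "\<forall>X\<in>tens C D phi. \<forall>c\<in>carrier C.
      iota (tlift C D phi (lmul C c) X) = vlmul C n c (iota X)"
    and iota_rmul: "\<forall>X\<in>tens C D phi. \<forall>d\<in>carrier D.
      iota (tlift C D phi (rmul C (phi d)) X) = vrmul C n (phi d) (iota X)"
    and pi_vadd: "\<forall>v\<in>cvec C n. \<forall>w\<in>cvec C n. pi (vadd C n v w) = tadd C D phi (pi v) (pi w)"
    and pi_vlmul: "\<forall>v\<in>cvec C n. \<forall>c\<in>carrier C.
      pi (vlmul C n c v) = tlift C D phi (lmul C c) (pi v)"
    and pi_vrmul: "\<forall>v\<in>cvec C n. \<forall>d\<in>carrier D.
      pi (vrmul C n (phi d) v) = tlift C D phi (rmul C (phi d)) (pi v)"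
    and pi_iota: "\<forall>X\<in>tens C D phi. pi (iota X) = X"
begin

definition unit_vec :: "nat \<Rightarrow> nat \<Rightarrow> 'c" where
  "unit_vec j = (\<lambda>i\<in>{..<n}. if i = j then \<one>\<^bsub>C\<^esub> else \<zero>\<^bsub>C\<^esub>)"

definition split_gamma :: "nat \<Rightarrow> 'c \<Rightarrow> 'c" where
  "split_gamma j a = iota (tcls C D phi [(\<one>\<^bsub>C\<^esub>, a)]) j"

definition split_u :: "nat \<Rightarrow> ('c \<times> 'c) list" where
  "split_u j = (SOME xs. xs \<in> pi (unit_vec j))"

lemma unit_vec_cvec: "unit_vec j \<in> cvec C n"
  unfolding unit_vec_def cvec_def by (simp add: restrict_PiE_iff)

lemma one_tens: "a \<in> carrier C \<Longrightarrow> tcls C D phi [(\<one>\<^bsub>C\<^esub>, a)] \<in> tens C D phi"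
  by (intro tcls_in_tens) simp

lemma iota_one_tens: "a \<in> carrier C \<Longrightarrow> iota (tcls C D phi [(\<one>\<^bsub>C\<^esub>, a)]) \<in> cvec C n"
  using iota one_tens by blast

lemma split_gamma_bend: "j < n \<Longrightarrow> split_gamma j \<in> bend C D phi"
proof -
  assume j: "j < n"
  let ?G = "\<lambda>a. tcls C D phi [(\<one>\<^bsub>C\<^esub>, a)]"
  have "?G (a \<oplus>\<^bsub>C\<^esub> b) = tadd C D phi (?G a) (?G b)"
    if "a \<in> carrier C" "b \<in> carrier C" for a b
    using that tcls_eq[OF teq_addr[of "\<one>\<^bsub>C\<^esub>" a b]] by (simp add: tadd_tcls)
  then have add: "split_gamma j (a \<oplus>\<^bsub>C\<^esub> b) = split_gamma j a \<oplus>\<^bsub>C\<^esub> split_gamma j b"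
    if "a \<in> carrier C" "b \<in> carrier C" for a b
    using that j iota_tadd one_tens by (simp add: split_gamma_def vadd_def)
  have "?G (phi d \<otimes>\<^bsub>C\<^esub> a) = tlift C D phi (lmul C (phi d)) (?G a)"
    if "d \<in> carrier D" "a \<in> carrier C" for d a
    using that tcls_eq[OF teq_bal[of "\<one>\<^bsub>C\<^esub>" d a]] by (simp add: tlift_lmul lmul_def)
  then have left: "split_gamma j (phi d \<otimes>\<^bsub>C\<^esub> a) = phi d \<otimes>\<^bsub>C\<^esub> split_gamma j a"
    if "d \<in> carrier D" "a \<in> carrier C" for d a
    using that j iota_lmul one_tens by (simp add: split_gamma_def vlmul_def)
  have "?G (a \<otimes>\<^bsub>C\<^esub> phi d) = tlift C D phi (rmul C (phi d)) (?G a)"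
    if "d \<in> carrier D" "a \<in> carrier C" for d a
    using that by (simp add: tlift_rmul rmul_def)
  then have right: "split_gamma j (a \<otimes>\<^bsub>C\<^esub> phi d) = split_gamma j a \<otimes>\<^bsub>C\<^esub> phi d"
    if "d \<in> carrier D" "a \<in> carrier C" for d a
    using that j iota_rmul one_tens by (simp add: split_gamma_def vrmul_def)
  have "split_gamma j a \<in> carrier C" if "a \<in> carrier C" for a
    using cvecD[OF iota_one_tens[OF that] j] by (simp add: split_gamma_def)
  with add left right show ?thesis
    unfolding bend_def lend_def additive_on_def by auto
qed

lemma split_u: "split_u j \<in> fsums C" "pi (unit_vec j) = tcls C D phi (split_u j)"
proof -
  have "pi (unit_vec j) \<in> tens C D phi"
    using pi unit_vec_cvec by blast
  then obtain xs where xs: "xs \<in> fsums C" "pi (unit_vec j) = tcls C D phi xs"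
    by (rule tensE)
  then have "split_u j \<in> tcls C D phi xs"
    unfolding split_u_def by (simp add: some_in_tcls)
  with xs show "split_u j \<in> fsums C" "pi (unit_vec j) = tcls C D phi (split_u j)"
    by (simp_all add: mem_tcls tcls_eq_iff)
qed

lemma split_u_tcent: "split_u j \<in> tcent C D phi"
  unfolding tcent_def
proof (intro CollectI conjI ballI)
  fix d assume d: "d \<in> carrier D"
  have "vlmul C n (phi d) (unit_vec j) = vrmul C n (phi d) (unit_vec j)"
    unfolding vlmul_def vrmul_def unit_vec_def using d by (intro restrict_ext) simp
  then have "tlift C D phi (lmul C (phi d)) (pi (unit_vec j))
      = tlift C D phi (rmul C (phi d)) (pi (unit_vec j))"
    using pi_vlmul pi_vrmul unit_vec_cvec d by (metis phi_closed)
  then show "TEQ (lmul C (phi d) (split_u j)) (rmul C (phi d) (split_u j))"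
    using split_u d by (simp add: tlift_lmul tlift_rmul tcls_eq_iff fsums_lmul)
qed (use split_u in simp)

lemma pi_eq_tcls: "v \<in> cvec C n \<Longrightarrow>
    pi v = tcls C D phi (concat (map (\<lambda>j. lmul C (v j) (split_u j)) [0..<n]))"
proof -
  assume v: "v \<in> cvec C n"
  define w where "w k = (\<lambda>i\<in>{..<n}. if i < k then v i else \<zero>\<^bsub>C\<^esub>)" for k
  define L where "L k = concat (map (\<lambda>j. lmul C (v j) (split_u j)) [0..<k])" for k
  have w_cvec: "w k \<in> cvec C n" for k
    unfolding w_def cvec_def using cvecD[OF v] by (simp add: restrict_PiE_iff)
  have "pi (w k) = tcls C D phi (L k)" if "k \<le> n" for k
    using that
  proof (induction k)
    case 0
    have "pi (w 0) \<in> tens C D phi"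
      using pi w_cvec by blast
    then obtain zs where zs: "zs \<in> fsums C" "pi (w 0) = tcls C D phi zs"
      by (rule tensE)
    have "vadd C n (w 0) (w 0) = w 0"
      unfolding vadd_def w_def by (intro restrict_ext) simp
    then have "tcls C D phi zs = tcls C D phi (zs @ zs)"
      using pi_vadd w_cvec zs by (metis tadd_tcls)
    then have "TEQ ([] @ zs) (zs @ zs)"
      using zs by (simp add: tcls_eq_iff)
    then have "TEQ [] zs"
      by (rule teq_cancel)
    with zs show ?case
      by (simp add: L_def tcls_eq[of C D phi "[]" zs])
  next
    case (Suc k)
    then have k: "k < n" by simp
    have vk: "v k \<in> carrier C" by (rule cvecD[OF v k])
    have "w (Suc k) = vadd C n (w k) (vlmul C n (v k) (unit_vec k))"
      unfolding vadd_def vlmul_def w_def unit_vec_def using cvecD[OF v] k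
      by (intro restrict_ext) (auto simp: less_Suc_eq)
    moreover have "vlmul C n (v k) (unit_vec k) \<in> cvec C n"
      unfolding vlmul_def cvec_def using cvecD[OF unit_vec_cvec] vk by (simp add: restrict_PiE_iff)
    ultimately have "pi (w (Suc k))
        = tadd C D phi (pi (w k)) (tlift C D phi (lmul C (v k)) (pi (unit_vec k)))"
      using pi_vadd pi_vlmul w_cvec unit_vec_cvec vk by simp
    also have "\<dots> = tcls C D phi (L (Suc k))"
    proof -
      have "L k \<in> fsums C"
        unfolding L_def using k cvecD[OF v] split_u by (auto intro!: fsums_lmul)
      then show ?thesis
        using Suc k vk split_u[of k] by (simp add: tlift_lmul tadd_tcls fsums_lmul L_def)
    qed
    finally show ?case .
  qed
  moreover have "w n = v"
    unfolding w_def using v by (auto simp: cvec_def PiE_def extensional_def)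
  ultimately show ?thesis
    unfolding L_def by (metis order_refl)
qed

lemma split_qb_identity:
  assumes a: "a \<in> carrier C" "a' \<in> carrier C"
  shows "TEQ [(a, a')] (concat (map (\<lambda>j. map (\<lambda>(p, q).
    (a \<otimes>\<^bsub>C\<^esub> split_gamma j a' \<otimes>\<^bsub>C\<^esub> p, q)) (split_u j)) [0..<n]))"
proof -
  let ?v = "vlmul C n a (iota (tcls C D phi [(\<one>\<^bsub>C\<^esub>, a')]))"
  have v: "?v \<in> cvec C n"
    unfolding vlmul_def cvec_def using a cvecD[OF iota_one_tens] by (simp add: restrict_PiE_iff)
  have "tcls C D phi [(a, a')] = tlift C D phi (lmul C a) (tcls C D phi [(\<one>\<^bsub>C\<^esub>, a')])"
    using a by (simp add: tlift_lmul lmul_def)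
  then have "iota (tcls C D phi [(a, a')]) = ?v"
    using iota_lmul one_tens a by simp
  moreover have "tcls C D phi [(a, a')] = pi (iota (tcls C D phi [(a, a')]))"
    using pi_iota a by (simp add: tcls_in_tens)
  ultimately have "tcls C D phi [(a, a')] = pi ?v"
    by simp
  also have "\<dots> = tcls C D phi (concat (map (\<lambda>j. lmul C (?v j) (split_u j)) [0..<n]))"
    by (rule pi_eq_tcls[OF v])
  also have "concat (map (\<lambda>j. lmul C (?v j) (split_u j)) [0..<n])
      = concat (map (\<lambda>j. map (\<lambda>(p, q). (a \<otimes>\<^bsub>C\<^esub> split_gamma j a' \<otimes>\<^bsub>C\<^esub> p, q)) (split_u j)) [0..<n])"
    unfolding lmul_def split_gamma_def vlmul_def
    by (intro arg_cong[where f = concat] map_cong) simp_all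
  finally show ?thesis
    using a by (simp add: tcls_eq_iff)
qed

lemma right_D2_qb_split: "right_D2_qb C D phi n split_gamma split_u"
  unfolding right_D2_qb_def using split_gamma_bend split_u_tcent split_qb_identity by blast

end

lemma right_D2_qb_exists: "right_D2 C D phi \<Longrightarrow> \<exists>m gamma u. right_D2_qb C D phi m gamma u"
  unfolding right_D2_def by (elim exE conjE) (intro exI, rule right_D2_qb_split; assumption)

end

section \<open>The endomorphism ring and the extension \<open>\<rho>\<close>\<close>

locale rho_extension =
  fixes A :: "'a ring" and B :: "'b ring" and phi :: "'b \<Rightarrow> 'a"
  assumes A: "ring A" and phi: "phi \<in> carrier B \<rightarrow> carrier A"
begin

sublocale A: lsum_ring A by (rule lsum_ring.intro[OF A])

abbreviation E where "E \<equiv> End_ring A B phi"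

lemma phi_closed [simp]: "d \<in> carrier B \<Longrightarrow> phi d \<in> carrier A"
  using phi by auto

lemma E_mem: "f \<in> carrier E \<longleftrightarrow> f \<in> carrier A \<rightarrow> carrier A \<and> additive_on A f \<and>
   (\<forall>d\<in>carrier B. \<forall>x\<in>carrier A. f (phi d \<otimes>\<^bsub>A\<^esub> x) = phi d \<otimes>\<^bsub>A\<^esub> f x) \<and> f \<in> extensional (carrier A)"
  by (simp add: End_ring_def lend_def)

lemma E_closed: "f \<in> carrier E \<Longrightarrow> x \<in> carrier A \<Longrightarrow> f x \<in> carrier A"
  by (auto simp: E_mem)

lemma E_add: "f \<in> carrier E \<Longrightarrow> x \<in> carrier A \<Longrightarrow> y \<in> carrier A \<Longrightarrow> f (x \<oplus>\<^bsub>A\<^esub> y) = f x \<oplus>\<^bsub>A\<^esub> f y"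
  by (auto simp: E_mem additive_on_def)

lemma E_lin: "f \<in> carrier E \<Longrightarrow> d \<in> carrier B \<Longrightarrow> x \<in> carrier A \<Longrightarrow> f (phi d \<otimes>\<^bsub>A\<^esub> x) = phi d \<otimes>\<^bsub>A\<^esub> f x"
  by (auto simp: E_mem)

lemma E_ext: "f \<in> carrier E \<Longrightarrow> g \<in> carrier E \<Longrightarrow> (\<And>x. x \<in> carrier A \<Longrightarrow> f x = g x) \<Longrightarrow> f = g"
  by (rule extensionalityI[of _ "carrier A"]) (auto simp: E_mem)

lemma E_fun: "f \<in> carrier E \<Longrightarrow> f \<in> carrier A \<rightarrow> carrier A"
  by (auto simp: E_mem)

lemma E_additive: "f \<in> carrier E \<Longrightarrow> additive_on A f"
  by (auto simp: E_mem)

lemma E_memI: "(\<And>x. x \<in> carrier A \<Longrightarrow> f x \<in> carrier A) \<Longrightarrow>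
   (\<And>x y. x \<in> carrier A \<Longrightarrow> y \<in> carrier A \<Longrightarrow> f (x \<oplus>\<^bsub>A\<^esub> y) = f x \<oplus>\<^bsub>A\<^esub> f y) \<Longrightarrow>
   (\<And>d x. d \<in> carrier B \<Longrightarrow> x \<in> carrier A \<Longrightarrow> f (phi d \<otimes>\<^bsub>A\<^esub> x) = phi d \<otimes>\<^bsub>A\<^esub> f x) \<Longrightarrow>
   f \<in> extensional (carrier A) \<Longrightarrow> f \<in> carrier E"
  by (auto simp: E_mem additive_on_def)

lemma E_mult_apply [simp]: "x \<in> carrier A \<Longrightarrow> (f \<otimes>\<^bsub>E\<^esub> g) x = f (g x)"
  by (simp add: End_ring_def)

lemma E_add_apply [simp]: "x \<in> carrier A \<Longrightarrow> (f \<oplus>\<^bsub>E\<^esub> g) x = f x \<oplus>\<^bsub>A\<^esub> g x"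
  by (simp add: End_ring_def)

lemma E_zero_apply [simp]: "x \<in> carrier A \<Longrightarrow> \<zero>\<^bsub>E\<^esub> x = \<zero>\<^bsub>A\<^esub>"
  by (simp add: End_ring_def)

lemma E_one_apply [simp]: "x \<in> carrier A \<Longrightarrow> \<one>\<^bsub>E\<^esub> x = x"
  by (simp add: End_ring_def)

lemma E_mult_ext: "f \<otimes>\<^bsub>E\<^esub> g \<in> extensional (carrier A)"
  by (simp add: End_ring_def)

lemma E_add_ext: "f \<oplus>\<^bsub>E\<^esub> g \<in> extensional (carrier A)"
  by (simp add: End_ring_def)

lemma E_mult_closed: "f \<in> carrier E \<Longrightarrow> g \<in> carrier E \<Longrightarrow> f \<otimes>\<^bsub>E\<^esub> g \<in> carrier E"
  by (rule E_memI) (simp_all add: E_closed E_add E_lin E_mult_ext)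

lemma E_add_closed: "f \<in> carrier E \<Longrightarrow> g \<in> carrier E \<Longrightarrow> f \<oplus>\<^bsub>E\<^esub> g \<in> carrier E"
  by (rule E_memI) (simp_all add: E_closed E_add E_lin E_add_ext A.r_distr A.a_ac)

lemma E_zero_closed: "\<zero>\<^bsub>E\<^esub> \<in> carrier E"
  by (rule E_memI) (simp_all add: End_ring_def)

lemma E_one_closed: "\<one>\<^bsub>E\<^esub> \<in> carrier E"
  by (rule E_memI) (simp_all add: End_ring_def)

lemma E_abelian_group: "abelian_group E"
proof (rule abelian_groupI)
  fix x y z assume xyz: "x \<in> carrier E" "y \<in> carrier E" "z \<in> carrier E"
  show "x \<oplus>\<^bsub>E\<^esub> y \<oplus>\<^bsub>E\<^esub> z = x \<oplus>\<^bsub>E\<^esub> (y \<oplus>\<^bsub>E\<^esub> z)"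
    using xyz by (intro E_ext) (simp_all add: E_add_closed E_closed A.a_assoc)
next
  fix x y assume xy: "x \<in> carrier E" "y \<in> carrier E"
  show "x \<oplus>\<^bsub>E\<^esub> y \<in> carrier E" using xy by (rule E_add_closed)
  show "x \<oplus>\<^bsub>E\<^esub> y = y \<oplus>\<^bsub>E\<^esub> x"
    using xy by (intro E_ext) (simp_all add: E_add_closed E_closed A.a_comm)
next
  show "\<zero>\<^bsub>E\<^esub> \<in> carrier E" by (rule E_zero_closed)
next
  fix x assume x: "x \<in> carrier E"
  show "\<zero>\<^bsub>E\<^esub> \<oplus>\<^bsub>E\<^esub> x = x"
    using x by (intro E_ext) (simp_all add: E_add_closed E_zero_closed E_closed)
  define y where "y = (\<lambda>a\<in>carrier A. \<ominus>\<^bsub>A\<^esub> x a)"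
  have y: "y \<in> carrier E"
    unfolding y_def using x
    by (intro E_memI) (simp_all add: E_closed E_add E_lin A.minus_add A.r_minus)
  have "y \<oplus>\<^bsub>E\<^esub> x = \<zero>\<^bsub>E\<^esub>"
    using x y by (intro E_ext) (simp_all add: E_add_closed E_zero_closed E_closed y_def A.l_neg)
  then show "\<exists>y\<in>carrier E. y \<oplus>\<^bsub>E\<^esub> x = \<zero>\<^bsub>E\<^esub>" using y by blast
qed

lemma E_monoid: "monoid E"
proof (rule monoidI)
  fix x y z assume xyz: "x \<in> carrier E" "y \<in> carrier E" "z \<in> carrier E"
  show "x \<otimes>\<^bsub>E\<^esub> y \<otimes>\<^bsub>E\<^esub> z = x \<otimes>\<^bsub>E\<^esub> (y \<otimes>\<^bsub>E\<^esub> z)"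
    using xyz by (intro E_ext) (simp_all add: E_mult_closed E_closed)
next
  fix x y assume xy: "x \<in> carrier E" "y \<in> carrier E"
  show "x \<otimes>\<^bsub>E\<^esub> y \<in> carrier E" using xy by (rule E_mult_closed)
next
  show "\<one>\<^bsub>E\<^esub> \<in> carrier E" by (rule E_one_closed)
next
  fix x assume x: "x \<in> carrier E"
  show "\<one>\<^bsub>E\<^esub> \<otimes>\<^bsub>E\<^esub> x = x"
    using x by (intro E_ext) (simp_all add: E_mult_closed E_one_closed E_closed)
  show "x \<otimes>\<^bsub>E\<^esub> \<one>\<^bsub>E\<^esub> = x"
    using x by (intro E_ext) (simp_all add: E_mult_closed E_one_closed E_closed)
qed

lemma E_ring: "ring E"
proof (rule ringI[OF E_abelian_group E_monoid])
  fix x y z assume xyz: "x \<in> carrier E" "y \<in> carrier E" "z \<in> carrier E"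
  show "(x \<oplus>\<^bsub>E\<^esub> y) \<otimes>\<^bsub>E\<^esub> z = x \<otimes>\<^bsub>E\<^esub> z \<oplus>\<^bsub>E\<^esub> y \<otimes>\<^bsub>E\<^esub> z"
    using xyz by (intro E_ext) (simp_all add: E_mult_closed E_add_closed E_closed)
  show "z \<otimes>\<^bsub>E\<^esub> (x \<oplus>\<^bsub>E\<^esub> y) = z \<otimes>\<^bsub>E\<^esub> x \<oplus>\<^bsub>E\<^esub> z \<otimes>\<^bsub>E\<^esub> y"
    using xyz by (intro E_ext) (simp_all add: E_mult_closed E_add_closed E_closed E_add)
qed

sublocale E: lsum_ring E by (rule lsum_ring.intro[OF E_ring])

lemma rho_apply [simp]: "x \<in> carrier A \<Longrightarrow> rho A a x = x \<otimes>\<^bsub>A\<^esub> a"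
  by (simp add: rho_def)

lemma rho_closed: "a \<in> carrier A \<Longrightarrow> rho A a \<in> carrier E"
  by (rule E_memI) (simp_all add: rho_def A.l_distr A.m_assoc)

lemma op_carrier [simp]: "carrier (op_ring A) = carrier A"
  by (simp add: op_ring_def)

sublocale Erho: ring_extension E "op_ring A" "rho A"
  by (rule ring_extension.intro[OF E_ring]) (auto intro: rho_closed)

lemma E_lsum_apply: "x \<in> carrier A \<Longrightarrow> lsum E fs x = lsum A (map (\<lambda>f. f x) fs)"
  by (induction fs) (simp_all add: lsum_def)

definition mult_at_one :: "('a \<Rightarrow> 'a) \<Rightarrow> ('a \<Rightarrow> 'a) \<Rightarrow> 'a \<Rightarrow> 'a" where
  "mult_at_one g0 g = (\<lambda>x\<in>carrier A. g0 x \<otimes>\<^bsub>A\<^esub> g \<one>\<^bsub>A\<^esub>)"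

lemma mult_at_one_apply [simp]:
  "x \<in> carrier A \<Longrightarrow> mult_at_one g0 g x = g0 x \<otimes>\<^bsub>A\<^esub> g \<one>\<^bsub>A\<^esub>"
  by (simp add: mult_at_one_def)

lemma mult_at_one_closed: "g0 \<in> carrier E \<Longrightarrow> g \<in> carrier E \<Longrightarrow> mult_at_one g0 g \<in> carrier E"
  unfolding mult_at_one_def
  by (rule E_memI) (simp_all add: E_closed E_add E_lin A.l_distr A.m_assoc)

lemma mult_at_one_lend:
  assumes g0: "g0 \<in> carrier E"
  shows "mult_at_one g0 \<in> lend E (op_ring A) (rho A)"
  unfolding lend_def additive_on_def
proof (intro CollectI conjI ballI)
  show "mult_at_one g0 \<in> carrier E \<rightarrow> carrier E"
    using mult_at_one_closed[OF g0] by blast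
next
  fix f g assume "f \<in> carrier E" "g \<in> carrier E"
  then show "mult_at_one g0 (f \<oplus>\<^bsub>E\<^esub> g) = mult_at_one g0 f \<oplus>\<^bsub>E\<^esub> mult_at_one g0 g"
    using g0 by (intro E_ext) (simp_all add: mult_at_one_closed E_add_closed E_closed A.r_distr)
next
  fix a f assume "a \<in> carrier (op_ring A)" "f \<in> carrier E"
  then show "mult_at_one g0 (rho A a \<otimes>\<^bsub>E\<^esub> f) = rho A a \<otimes>\<^bsub>E\<^esub> mult_at_one g0 f"
    using g0
    by (intro E_ext) (simp_all add: mult_at_one_closed E_mult_closed rho_closed E_closed A.m_assoc)
qed

lemma left_balanced: "left_balanced E (op_ring A) (rho A)"
  unfolding left_balanced_def
proof (intro allI impI)
  fix h assume h: "h \<in> carrier E \<rightarrow> carrier E \<and> additive_on E h \<and>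
      (\<forall>f\<in>lend E (op_ring A) (rho A). \<forall>x\<in>carrier E. h (f x) = f (h x))"
  define d where "d = h \<one>\<^bsub>E\<^esub> \<one>\<^bsub>A\<^esub>"
  have h1: "h \<one>\<^bsub>E\<^esub> \<in> carrier E"
    using h E_one_closed by blast
  have "h g0 = rho A d \<otimes>\<^bsub>E\<^esub> g0" if g0: "g0 \<in> carrier E" for g0
  proof -
    have "mult_at_one g0 \<one>\<^bsub>E\<^esub> = g0"
      using g0 by (intro E_ext) (simp_all add: mult_at_one_closed E_one_closed E_closed)
    moreover have "mult_at_one g0 (h \<one>\<^bsub>E\<^esub>) = rho A d \<otimes>\<^bsub>E\<^esub> g0"
      using g0 h1 E_closed[OF h1]
      by (intro E_ext) (simp_all add: mult_at_one_closed E_mult_closed rho_closed E_closed d_def)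
    ultimately show ?thesis
      using h mult_at_one_lend[OF g0] E_one_closed by metis
  qed
  moreover have "d \<in> carrier A"
    unfolding d_def by (rule E_closed[OF h1 A.one_closed])
  ultimately show "\<exists>d\<in>carrier (op_ring A). \<forall>x\<in>carrier E. h x = rho A d \<otimes>\<^bsub>E\<^esub> x"
    by auto
qed

end

section \<open>The left D2 quasibase of \<open>\<rho>\<close>\<close>

locale right_D2_quasibase = rho_extension A B phi
  for A :: "'a ring" and B :: "'b ring" and phi +
  fixes m :: nat and gamma :: "nat \<Rightarrow> 'a \<Rightarrow> 'a" and u :: "nat \<Rightarrow> ('a \<times> 'a) list"
  assumes qb: "right_D2_qb A B phi m gamma u"
begin

sublocale AB: ring_extension A B phi
  by (rule ring_extension.intro[OF A phi])

lemma gamma_bend: "j < m \<Longrightarrow> gamma j \<in> bend A B phi"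
  using qb by (simp add: right_D2_qb_def)

lemma gamma_funcset: "j < m \<Longrightarrow> gamma j \<in> carrier A \<rightarrow> carrier A"
  using gamma_bend by (simp add: bend_def lend_def)

lemma gamma_closed: "j < m \<Longrightarrow> x \<in> carrier A \<Longrightarrow> gamma j x \<in> carrier A"
  using gamma_funcset by blast

lemma gamma_additive: "j < m \<Longrightarrow> additive_on A (gamma j)"
  using gamma_bend by (simp add: bend_def lend_def)

lemma gamma_add:
  "j < m \<Longrightarrow> x \<in> carrier A \<Longrightarrow> y \<in> carrier A \<Longrightarrow> gamma j (x \<oplus>\<^bsub>A\<^esub> y) = gamma j x \<oplus>\<^bsub>A\<^esub> gamma j y"
  using gamma_additive by (simp add: additive_on_def)

lemma gamma_left:
  "j < m \<Longrightarrow> d \<in> carrier B \<Longrightarrow> x \<in> carrier A \<Longrightarrow> gamma j (phi d \<otimes>\<^bsub>A\<^esub> x) = phi d \<otimes>\<^bsub>A\<^esub> gamma j x"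
  using gamma_bend by (simp add: bend_def lend_def)

lemma gamma_right:
  "j < m \<Longrightarrow> d \<in> carrier B \<Longrightarrow> x \<in> carrier A \<Longrightarrow> gamma j (x \<otimes>\<^bsub>A\<^esub> phi d) = gamma j x \<otimes>\<^bsub>A\<^esub> phi d"
  using gamma_bend by (simp add: bend_def)

lemma u_tcent: "l < m \<Longrightarrow> u l \<in> tcent A B phi"
  using qb by (simp add: right_D2_qb_def)

lemma u_fsums: "l < m \<Longrightarrow> u l \<in> fsums A"
  using u_tcent by (simp add: tcent_def)

lemma u_carrier: "(p, q) \<in> set (u l) \<Longrightarrow> l < m \<Longrightarrow> p \<in> carrier A \<and> q \<in> carrier A"
  by (rule fsumsD[OF u_fsums])

lemma lsum_u_cong:
  assumes "l < m" and "\<And>p q. p \<in> carrier A \<Longrightarrow> q \<in> carrier A \<Longrightarrow> f p q = g p q"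
  shows "lsum A (map (\<lambda>(p, q). f p q) (u l)) = lsum A (map (\<lambda>(p, q). g p q) (u l))"
proof (rule A.lsum_cong)
  fix b assume b: "b \<in> set (u l)"
  obtain p q where "b = (p, q)" by fastforce
  with b assms show "(\<lambda>(p, q). f p q) b = (\<lambda>(p, q). g p q) b"
    by (auto dest: u_carrier)
qed

lemma u_case_closed:
  "l < m \<Longrightarrow> (\<And>p q. p \<in> carrier A \<Longrightarrow> q \<in> carrier A \<Longrightarrow> f p q \<in> carrier A) \<Longrightarrow>
    b \<in> set (u l) \<Longrightarrow> (\<lambda>(p, q). f p q) b \<in> carrier A"
  by (cases b) (auto dest: u_carrier)

lemma lsum_u_mult_left:
  assumes "l < m" "c \<in> carrier A" "\<And>p q. p \<in> carrier A \<Longrightarrow> q \<in> carrier A \<Longrightarrow> f p q \<in> carrier A"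
  shows "c \<otimes>\<^bsub>A\<^esub> lsum A (map (\<lambda>(p, q). f p q) (u l)) = lsum A (map (\<lambda>(p, q). c \<otimes>\<^bsub>A\<^esub> f p q) (u l))"
  using A.lsum_mult_left[OF assms(2) u_case_closed[OF assms(1,3)]] by (simp add: split_def)

lemma lsum_u_mult_right:
  assumes "l < m" "c \<in> carrier A" "\<And>p q. p \<in> carrier A \<Longrightarrow> q \<in> carrier A \<Longrightarrow> f p q \<in> carrier A"
  shows "lsum A (map (\<lambda>(p, q). f p q) (u l)) \<otimes>\<^bsub>A\<^esub> c = lsum A (map (\<lambda>(p, q). f p q \<otimes>\<^bsub>A\<^esub> c) (u l))"
  using A.lsum_mult_right[OF assms(2) u_case_closed[OF assms(1,3)]] by (simp add: split_def)

lemma lsum_u_add: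
  assumes "l < m"
    and "\<And>p q. p \<in> carrier A \<Longrightarrow> q \<in> carrier A \<Longrightarrow> f p q \<in> carrier A"
    and "\<And>p q. p \<in> carrier A \<Longrightarrow> q \<in> carrier A \<Longrightarrow> g p q \<in> carrier A"
  shows "lsum A (map (\<lambda>(p, q). f p q \<oplus>\<^bsub>A\<^esub> g p q) (u l))
    = lsum A (map (\<lambda>(p, q). f p q) (u l)) \<oplus>\<^bsub>A\<^esub> lsum A (map (\<lambda>(p, q). g p q) (u l))"
  using A.lsum_map_add[OF u_case_closed[OF assms(1,2)] u_case_closed[OF assms(1,3)]]
  by (simp add: split_def)

lemma u_balanced:
  "l < m \<Longrightarrow> d \<in> carrier B \<Longrightarrow> AB.TEQ (lmul A (phi d) (u l)) (rmul A (phi d) (u l))"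
  using u_tcent by (simp add: tcent_def)

lemma lsum_concat_u:
  assumes "\<And>j p q. j < m \<Longrightarrow> (p, q) \<in> set (u j) \<Longrightarrow> F j p q \<in> carrier A"
  shows "lsum A (concat (map (\<lambda>j. map (\<lambda>(p, q). F j p q) (u j)) [0..<m])) =
    lsum A (map (\<lambda>j. lsum A (map (\<lambda>(p, q). F j p q) (u j))) [0..<m])"
  using assms by (subst A.lsum_concat) (auto simp: comp_def)

lemma qb_expand_balanced:
  assumes a: "a \<in> carrier A" "a' \<in> carrier A"
    and closed: "\<And>x y. x \<in> carrier A \<Longrightarrow> y \<in> carrier A \<Longrightarrow> h x y \<in> carrier A"
    and add_left: "\<And>x x' y. \<lbrakk>x \<in> carrier A; x' \<in> carrier A; y \<in> carrier A\<rbrakk> \<Longrightarrow>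
      h (x \<oplus>\<^bsub>A\<^esub> x') y = h x y \<oplus>\<^bsub>A\<^esub> h x' y"
    and add_right: "\<And>x y y'. \<lbrakk>x \<in> carrier A; y \<in> carrier A; y' \<in> carrier A\<rbrakk> \<Longrightarrow>
      h x (y \<oplus>\<^bsub>A\<^esub> y') = h x y \<oplus>\<^bsub>A\<^esub> h x y'"
    and balanced: "\<And>x d y. \<lbrakk>x \<in> carrier A; d \<in> carrier B; y \<in> carrier A\<rbrakk> \<Longrightarrow>
      h (x \<otimes>\<^bsub>A\<^esub> phi d) y = h x (phi d \<otimes>\<^bsub>A\<^esub> y)"
  shows "h a a' = lsum A (map (\<lambda>j. lsum A (map (\<lambda>(p, q).
    h (a \<otimes>\<^bsub>A\<^esub> gamma j a' \<otimes>\<^bsub>A\<^esub> p) q) (u j))) [0..<m])"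
proof -
  let ?qb = "concat (map (\<lambda>j. map (\<lambda>(p, q). (a \<otimes>\<^bsub>A\<^esub> gamma j a' \<otimes>\<^bsub>A\<^esub> p, q)) (u j)) [0..<m])"
  have "?qb \<in> fsums A"
    using a by (auto simp: fsums_def gamma_closed dest: u_carrier)
  moreover have "AB.TEQ [(a, a')] ?qb"
    using qb a by (simp add: right_D2_qb_def)
  ultimately have "lsum A (map (\<lambda>(x, y). h x y) [(a, a')]) = lsum A (map (\<lambda>(x, y). h x y) ?qb)"
    using a closed add_left add_right balanced by (intro AB.lsum_balanced_cong[OF A]) auto
  also have "map (\<lambda>(x, y). h x y) ?qb
      = concat (map (\<lambda>j. map (\<lambda>(p, q). h (a \<otimes>\<^bsub>A\<^esub> gamma j a' \<otimes>\<^bsub>A\<^esub> p) q) (u j)) [0..<m])"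
    by (simp add: map_concat comp_def split_def)
  also have "lsum A \<dots> = lsum A (map (\<lambda>j. lsum A (map (\<lambda>(p, q).
      h (a \<otimes>\<^bsub>A\<^esub> gamma j a' \<otimes>\<^bsub>A\<^esub> p) q) (u j))) [0..<m])"
    using a closed by (intro lsum_concat_u) (simp add: gamma_closed u_carrier)
  finally show ?thesis
    using closed a by simp
qed

text \<open>The quasibase identity for \<open>y \<otimes> z\<close>, pushed through \<open>a \<otimes> b \<mapsto> \<gamma>\<^sub>j(a) b\<close>.\<close>

lemma qb_gamma_expand:
  "j < m \<Longrightarrow> y \<in> carrier A \<Longrightarrow> z \<in> carrier A \<Longrightarrow>
    lsum A (map (\<lambda>k. lsum A (map (\<lambda>(p, q). gamma j (y \<otimes>\<^bsub>A\<^esub> gamma k z \<otimes>\<^bsub>A\<^esub> p) \<otimes>\<^bsub>A\<^esub> q) (u k))) [0..<m])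
    = gamma j y \<otimes>\<^bsub>A\<^esub> z"
  by (rule qb_expand_balanced[where h = "\<lambda>a b. gamma j a \<otimes>\<^bsub>A\<^esub> b", symmetric])
    (auto simp: gamma_closed gamma_add gamma_right A.l_distr A.r_distr A.m_assoc)

definition gammaE :: "nat \<Rightarrow> 'a \<Rightarrow> 'a" where
  "gammaE l = restrict (gamma l) (carrier A)"

lemma gammaE_closed: "l < m \<Longrightarrow> gammaE l \<in> carrier E"
  unfolding gammaE_def by (rule E_memI) (simp_all add: gamma_closed gamma_add gamma_left)

lemma gammaE_apply [simp]: "x \<in> carrier A \<Longrightarrow> gammaE l x = gamma l x"
  by (simp add: gammaE_def)

definition coeff :: "nat \<Rightarrow> ('a \<Rightarrow> 'a) \<Rightarrow> 'a" where
  "coeff l G = lsum A (map (\<lambda>(p, q). p \<otimes>\<^bsub>A\<^esub> G q) (u l))"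

lemma coeff_closed: "l < m \<Longrightarrow> G \<in> carrier E \<Longrightarrow> coeff l G \<in> carrier A"
  unfolding coeff_def by (rule A.lsum_map_closed) (auto simp: E_closed dest: u_carrier)

lemma End_expand:
  assumes G: "G \<in> carrier E" and x: "x \<in> carrier A"
  shows "G x = lsum A (map (\<lambda>l. gamma l x \<otimes>\<^bsub>A\<^esub> coeff l G) [0..<m])"
proof -
  have "\<one>\<^bsub>A\<^esub> \<otimes>\<^bsub>A\<^esub> G x = lsum A (map (\<lambda>l. lsum A (map (\<lambda>(p, q).
      (\<one>\<^bsub>A\<^esub> \<otimes>\<^bsub>A\<^esub> gamma l x \<otimes>\<^bsub>A\<^esub> p) \<otimes>\<^bsub>A\<^esub> G q) (u l))) [0..<m])"
    using G x by (intro qb_expand_balanced)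
      (auto simp: E_closed E_add E_lin A.l_distr A.r_distr A.m_assoc)
  also have "\<dots> = lsum A (map (\<lambda>l. gamma l x \<otimes>\<^bsub>A\<^esub> coeff l G) [0..<m])"
    unfolding coeff_def using G x
    by (intro A.lsum_cong, subst A.lsum_mult_left)
      (auto intro!: A.lsum_cong simp: gamma_closed E_closed A.m_assoc dest: u_carrier)
  finally show ?thesis
    using G x by (simp add: E_closed)
qed

lemma E_eq_lsum_coeff:
  assumes G: "G \<in> carrier E"
  shows "G = lsum E (map (\<lambda>l. rho A (coeff l G) \<otimes>\<^bsub>E\<^esub> gammaE l) [0..<m])"
proof (rule E_ext[OF G])
  show "lsum E (map (\<lambda>l. rho A (coeff l G) \<otimes>\<^bsub>E\<^esub> gammaE l) [0..<m]) \<in> carrier E"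
    using G by (auto intro!: E_mult_closed rho_closed coeff_closed gammaE_closed)
  fix x assume x: "x \<in> carrier A"
  have "lsum E (map (\<lambda>l. rho A (coeff l G) \<otimes>\<^bsub>E\<^esub> gammaE l) [0..<m]) x
      = lsum A (map (\<lambda>l. (rho A (coeff l G) \<otimes>\<^bsub>E\<^esub> gammaE l) x) [0..<m])"
    using x by (simp add: E_lsum_apply comp_def)
  also have "\<dots> = lsum A (map (\<lambda>l. gamma l x \<otimes>\<^bsub>A\<^esub> coeff l G) [0..<m])"
    using x by (intro A.lsum_cong) (simp add: gamma_closed)
  finally show "G x = lsum E (map (\<lambda>l. rho A (coeff l G) \<otimes>\<^bsub>E\<^esub> gammaE l) [0..<m]) x"
    using End_expand[OF G x] by simp
qed

definition coord :: "nat \<Rightarrow> (('a \<Rightarrow> 'a) \<times> ('a \<Rightarrow> 'a)) list \<Rightarrow> 'a \<Rightarrow> 'a" where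
  "coord l xs = lsum E (map (\<lambda>(F, G). F \<otimes>\<^bsub>E\<^esub> rho A (coeff l G)) xs)"

lemma coord_closed: "l < m \<Longrightarrow> xs \<in> fsums E \<Longrightarrow> coord l xs \<in> carrier E"
  unfolding coord_def
  by (rule E.lsum_map_closed) (auto simp: fsums_def intro!: E_mult_closed rho_closed coeff_closed)

lemma coord_Cons: "coord l ((F, G) # xs) = F \<otimes>\<^bsub>E\<^esub> rho A (coeff l G) \<oplus>\<^bsub>E\<^esub> coord l xs"
  by (simp add: coord_def)

lemma coord_apply:
  "x \<in> carrier A \<Longrightarrow> coord l xs x = lsum A (map (\<lambda>(F, G). F (x \<otimes>\<^bsub>A\<^esub> coeff l G)) xs)"
  unfolding coord_def by (simp add: E_lsum_apply comp_def split_def)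

lemma teq_simple_normal_form:
  assumes F: "F \<in> carrier E" and G: "G \<in> carrier E"
  shows "Erho.TEQ [(F, G)] (map (\<lambda>l. (F \<otimes>\<^bsub>E\<^esub> rho A (coeff l G), gammaE l)) [0..<m])"
proof -
  let ?Gs = "map (\<lambda>l. rho A (coeff l G) \<otimes>\<^bsub>E\<^esub> gammaE l) [0..<m]"
  have Gs: "set ?Gs \<subseteq> carrier E"
    using G by (auto intro!: E_mult_closed rho_closed coeff_closed gammaE_closed)
  have "Erho.TEQ [(F, G)] [(F, lsum E ?Gs)]"
    using E_eq_lsum_coeff[OF G] by (simp add: teq_refl)
  also have "Erho.TEQ \<dots> (map (\<lambda>l. (F, rho A (coeff l G) \<otimes>\<^bsub>E\<^esub> gammaE l)) [0..<m])"
    using Erho.teq_lsum_right[OF F Gs] by (simp add: comp_def)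
  also have "Erho.TEQ \<dots> (map (\<lambda>l. (F \<otimes>\<^bsub>E\<^esub> rho A (coeff l G), gammaE l)) [0..<m])"
    using F G
    by (intro teq_map teq_sym[OF Erho.teq_bal]) (auto intro: coeff_closed gammaE_closed)
  finally show ?thesis .
qed

lemma teq_normal_form: "xs \<in> fsums E \<Longrightarrow> Erho.TEQ xs (map (\<lambda>l. (coord l xs, gammaE l)) [0..<m])"
proof (induction xs)
  case Nil
  have "Erho.TEQ (map (\<lambda>l. (coord l [], gammaE l)) [0..<m]) []"
    by (rule Erho.teq_map_Nil) (auto simp: coord_def intro!: Erho.teq_zero_l gammaE_closed)
  then show ?case by (rule teq_sym)
next
  case (Cons p xs)
  obtain F G where p: "p = (F, G)" by fastforce
  have FG: "F \<in> carrier E" "G \<in> carrier E" "xs \<in> fsums E"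
    using Cons.prems p by auto
  have "Erho.TEQ ([(F, G)] @ xs) (map (\<lambda>l. (F \<otimes>\<^bsub>E\<^esub> rho A (coeff l G), gammaE l)) [0..<m]
      @ map (\<lambda>l. (coord l xs, gammaE l)) [0..<m])"
    using teq_simple_normal_form[OF FG(1,2)] Cons.IH[OF FG(3)] by (rule teq_append)
  also have "Erho.TEQ \<dots> (map (\<lambda>l. (coord l ((F, G) # xs), gammaE l)) [0..<m])"
    unfolding coord_Cons using FG
    by (intro teq_sym[OF Erho.teq_map_add_left])
      (auto intro!: E_mult_closed rho_closed coeff_closed gammaE_closed coord_closed)
  finally show ?case
    by (simp add: p)
qed

lemma teq_if_coord_eq:
  assumes xs: "xs \<in> fsums E" and ys: "ys \<in> fsums E"
    and coord_eq: "\<And>l x. l < m \<Longrightarrow> x \<in> carrier A \<Longrightarrow> coord l xs x = coord l ys x"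
  shows "Erho.TEQ xs ys"
proof -
  have "coord l xs = coord l ys" if "l < m" for l
    using that xs ys coord_eq by (intro E_ext) (simp_all add: coord_closed)
  then have "map (\<lambda>l. (coord l xs, gammaE l)) [0..<m] = map (\<lambda>l. (coord l ys, gammaE l)) [0..<m]"
    by simp
  with teq_normal_form[OF xs] have "Erho.TEQ xs (map (\<lambda>l. (coord l ys, gammaE l)) [0..<m])"
    by simp
  then show ?thesis
    using teq_sym[OF teq_normal_form[OF ys]] by (rule teq_trans)
qed

lemma coord_lmul_rho:
  assumes a: "a \<in> carrier A" and x: "x \<in> carrier A" and l: "l < m" and xs: "xs \<in> fsums E"
  shows "coord l (lmul E (rho A a) xs) x = coord l xs x \<otimes>\<^bsub>A\<^esub> a"
proof -
  have val: "F (x \<otimes>\<^bsub>A\<^esub> coeff l G) \<in> carrier A" if "(F, G) \<in> set xs" for F G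
    using fsumsD[OF xs that] x l by (simp add: E_closed coeff_closed)
  have "coord l xs x \<otimes>\<^bsub>A\<^esub> a
      = lsum A (map (\<lambda>(F, G). F (x \<otimes>\<^bsub>A\<^esub> coeff l G) \<otimes>\<^bsub>A\<^esub> a) xs)"
    unfolding coord_apply[OF x] split_def using val by (intro A.lsum_mult_right[OF a]) auto
  also have "\<dots> = coord l (lmul E (rho A a) xs) x"
    unfolding coord_apply[OF x] lmul_def map_map comp_def using val x l fsumsD[OF xs]
    by (intro A.lsum_cong) (auto simp: coeff_closed)
  finally show ?thesis ..
qed

definition qbT_left :: "nat \<Rightarrow> 'a \<Rightarrow> 'a \<Rightarrow> 'a \<Rightarrow> 'a" where
  "qbT_left j p q = restrict (\<lambda>x. gamma j (x \<otimes>\<^bsub>A\<^esub> p) \<otimes>\<^bsub>A\<^esub> q) (carrier A)"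

lemma qbT_left_apply [simp]: "x \<in> carrier A \<Longrightarrow> qbT_left j p q x = gamma j (x \<otimes>\<^bsub>A\<^esub> p) \<otimes>\<^bsub>A\<^esub> q"
  by (simp add: qbT_left_def)

lemma qbT_left_closed:
  "j < m \<Longrightarrow> p \<in> carrier A \<Longrightarrow> q \<in> carrier A \<Longrightarrow> qbT_left j p q \<in> carrier E"
  unfolding qbT_left_def
  by (rule E_memI) (simp_all add: gamma_closed gamma_add gamma_left A.l_distr A.m_assoc)

lemma qbT_eq:
  "qbT A m gamma u j = concat (map (\<lambda>k. map (\<lambda>(p, q). (qbT_left j p q, gammaE k)) (u k)) [0..<m])"
  by (simp add: qbT_def qbT_left_def gammaE_def)

lemma qbT_fsums: "j < m \<Longrightarrow> qbT A m gamma u j \<in> fsums E"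
  unfolding qbT_eq fsums_def by (auto simp: qbT_left_closed gammaE_closed dest!: u_carrier)

lemma gamma_lsum_distrib:
  assumes j: "j < m" and x: "x \<in> carrier A" and p: "p \<in> carrier A" and q: "q \<in> carrier A"
    and F: "\<And>b. b \<in> set bs \<Longrightarrow> F b \<in> carrier A"
  shows "gamma j ((x \<otimes>\<^bsub>A\<^esub> lsum A (map F bs)) \<otimes>\<^bsub>A\<^esub> p) \<otimes>\<^bsub>A\<^esub> q
    = lsum A (map (\<lambda>b. gamma j ((x \<otimes>\<^bsub>A\<^esub> F b) \<otimes>\<^bsub>A\<^esub> p) \<otimes>\<^bsub>A\<^esub> q) bs)"
proof -
  have "(x \<otimes>\<^bsub>A\<^esub> lsum A (map F bs)) \<otimes>\<^bsub>A\<^esub> p = lsum A (map (\<lambda>b. (x \<otimes>\<^bsub>A\<^esub> F b) \<otimes>\<^bsub>A\<^esub> p) bs)"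
    using x p F by (simp add: A.lsum_mult_left A.lsum_mult_right)
  then show ?thesis
    using x p q F j
    by (simp add: A.additive_on_lsum[OF gamma_funcset[OF j] gamma_additive[OF j]]
        A.lsum_mult_right gamma_closed)
qed

text \<open>The heart of the computation: inside \<open>coeff l (\<gamma>\<^sub>k \<circ> Z)\<close> the sum over \<open>k\<close>
  collapses by \<open>qb_gamma_expand\<close>.\<close>

lemma gamma_coeff_expand:
  assumes j: "j < m" and l: "l < m" and x: "x \<in> carrier A"
    and Z: "\<And>y. y \<in> carrier A \<Longrightarrow> Z y \<in> carrier A"
  shows "lsum A (map (\<lambda>k. lsum A (map (\<lambda>(p, q). gamma j ((x \<otimes>\<^bsub>A\<^esub>
      lsum A (map (\<lambda>(p', q'). p' \<otimes>\<^bsub>A\<^esub> gamma k (Z q')) (u l))) \<otimes>\<^bsub>A\<^esub> p) \<otimes>\<^bsub>A\<^esub> q) (u k))) [0..<m])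
    = lsum A (map (\<lambda>(p', q'). gamma j (x \<otimes>\<^bsub>A\<^esub> p') \<otimes>\<^bsub>A\<^esub> Z q') (u l))"
    (is "?lhs = ?rhs")
proof -
  define T where "T k a b = gamma j (x \<otimes>\<^bsub>A\<^esub> fst b \<otimes>\<^bsub>A\<^esub> gamma k (Z (snd b))
    \<otimes>\<^bsub>A\<^esub> fst a) \<otimes>\<^bsub>A\<^esub> snd a" for k a b
  have u_fst_snd: "fst b \<in> carrier A" "snd b \<in> carrier A" if "b \<in> set (u k)" "k < m" for b k
    using that u_carrier[of "fst b" "snd b" k] by simp_all
  have T_closed: "T k a b \<in> carrier A" if "k < m" "a \<in> set (u k)" "b \<in> set (u l)" for k a b
    using that x Z l j u_fst_snd by (simp add: T_def gamma_closed)
  have "?lhs = lsum A (map (\<lambda>k. lsum A (map (\<lambda>a. lsum A (map (T k a) (u l))) (u k))) [0..<m])"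
  proof (rule A.lsum_cong, rule A.lsum_cong)
    fix k a assume "k \<in> set [0..<m]" and a: "a \<in> set (u k)"
    then have k: "k < m" by simp
    have F: "(\<lambda>(p', q'). p' \<otimes>\<^bsub>A\<^esub> gamma k (Z q')) b \<in> carrier A" if "b \<in> set (u l)" for b
      using u_fst_snd[OF that l] Z k by (simp add: split_def gamma_closed)
    have "gamma j ((x \<otimes>\<^bsub>A\<^esub> lsum A (map (\<lambda>(p', q'). p' \<otimes>\<^bsub>A\<^esub> gamma k (Z q')) (u l)))
        \<otimes>\<^bsub>A\<^esub> fst a) \<otimes>\<^bsub>A\<^esub> snd a
        = lsum A (map (\<lambda>b. gamma j ((x \<otimes>\<^bsub>A\<^esub> (\<lambda>(p', q'). p' \<otimes>\<^bsub>A\<^esub> gamma k (Z q')) b)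
            \<otimes>\<^bsub>A\<^esub> fst a) \<otimes>\<^bsub>A\<^esub> snd a) (u l))"
      using u_fst_snd[OF a k] by (rule gamma_lsum_distrib[OF j x _ _ F])
    also have "\<dots> = lsum A (map (T k a) (u l))"
      using x Z k l u_fst_snd[OF a k] u_fst_snd[OF _ l]
      by (intro A.lsum_cong) (simp add: T_def split_def gamma_closed A.m_assoc)
    finally show "(\<lambda>(p, q). gamma j ((x \<otimes>\<^bsub>A\<^esub>
        lsum A (map (\<lambda>(p', q'). p' \<otimes>\<^bsub>A\<^esub> gamma k (Z q')) (u l))) \<otimes>\<^bsub>A\<^esub> p) \<otimes>\<^bsub>A\<^esub> q) a
        = lsum A (map (T k a) (u l))"
      by (simp add: split_def)
  qed
  also have "\<dots> = lsum A (map (\<lambda>k. lsum A (map (\<lambda>b. lsum A (map (\<lambda>a. T k a b) (u k))) (u l))) [0..<m])"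
    using T_closed by (intro A.lsum_cong, rule A.lsum_swap) auto
  also have "\<dots> = lsum A (map (\<lambda>b. lsum A (map (\<lambda>k. lsum A (map (\<lambda>a. T k a b) (u k))) [0..<m])) (u l))"
    using T_closed by (intro A.lsum_swap A.lsum_map_closed) simp_all
  also have "\<dots> = ?rhs"
  proof (rule A.lsum_cong)
    fix b assume "b \<in> set (u l)"
    then show "lsum A (map (\<lambda>k. lsum A (map (\<lambda>a. T k a b) (u k))) [0..<m])
        = (\<lambda>(p', q'). gamma j (x \<otimes>\<^bsub>A\<^esub> p') \<otimes>\<^bsub>A\<^esub> Z q') b"
      using qb_gamma_expand[OF j, of "x \<otimes>\<^bsub>A\<^esub> fst b" "Z (snd b)"] x Z u_fst_snd[of b l] l
      by (simp add: T_def split_def)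
  qed
  finally show ?thesis .
qed

lemma coord_qbT_comp:
  assumes j: "j < m" and l: "l < m" and x: "x \<in> carrier A" and H: "H \<in> carrier E"
  shows "coord l (map (\<lambda>(P, Q). (P, Q \<otimes>\<^bsub>E\<^esub> H)) (qbT A m gamma u j)) x
    = lsum A (map (\<lambda>(p, q). gamma j (x \<otimes>\<^bsub>A\<^esub> p) \<otimes>\<^bsub>A\<^esub> H q) (u l))"
proof -
  have coeff_comp: "coeff l (gammaE k \<otimes>\<^bsub>E\<^esub> H) = lsum A (map (\<lambda>(p', q'). p' \<otimes>\<^bsub>A\<^esub> gamma k (H q')) (u l))"
    for k
    unfolding coeff_def using l H by (intro A.lsum_cong) (auto simp: E_closed dest!: u_carrier)
  have coeff_comp_closed: "x \<otimes>\<^bsub>A\<^esub> coeff l (gammaE k \<otimes>\<^bsub>E\<^esub> H) \<in> carrier A" if "k < m" for k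
    using that x l H by (simp add: coeff_closed E_mult_closed gammaE_closed)
  have "coord l (map (\<lambda>(P, Q). (P, Q \<otimes>\<^bsub>E\<^esub> H)) (qbT A m gamma u j)) x
      = lsum A (concat (map (\<lambda>k. map (\<lambda>(p, q).
          gamma j ((x \<otimes>\<^bsub>A\<^esub> coeff l (gammaE k \<otimes>\<^bsub>E\<^esub> H)) \<otimes>\<^bsub>A\<^esub> p) \<otimes>\<^bsub>A\<^esub> q) (u k)) [0..<m]))"
    unfolding coord_apply[OF x] qbT_eq map_concat map_map
    using coeff_comp_closed by (intro arg_cong[where f = "lsum A"] arg_cong[where f = concat] map_cong)
      (auto simp: split_def)
  also have "\<dots> = lsum A (map (\<lambda>k. lsum A (map (\<lambda>(p, q).
      gamma j ((x \<otimes>\<^bsub>A\<^esub> coeff l (gammaE k \<otimes>\<^bsub>E\<^esub> H)) \<otimes>\<^bsub>A\<^esub> p) \<otimes>\<^bsub>A\<^esub> q) (u k))) [0..<m])"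
    using coeff_comp_closed j by (intro lsum_concat_u) (auto simp: gamma_closed dest!: u_carrier)
  also have "\<dots> = lsum A (map (\<lambda>(p, q). gamma j (x \<otimes>\<^bsub>A\<^esub> p) \<otimes>\<^bsub>A\<^esub> H q) (u l))"
    unfolding coeff_comp using j l x H by (intro gamma_coeff_expand) (simp_all add: E_closed)
  finally show ?thesis .
qed

lemma qbT_tcent: "j < m \<Longrightarrow> qbT A m gamma u j \<in> tcent E (op_ring A) (rho A)"
  unfolding tcent_def
proof (intro CollectI conjI ballI)
  assume j: "j < m"
  let ?T = "qbT A m gamma u j"
  show T: "?T \<in> fsums E"
    by (rule qbT_fsums[OF j])
  fix a assume "a \<in> carrier (op_ring A)"
  then have a: "a \<in> carrier A" by simp
  have T_comp_one: "map (\<lambda>(P, Q). (P, Q \<otimes>\<^bsub>E\<^esub> \<one>\<^bsub>E\<^esub>)) ?T = ?T"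
    using fsumsD[OF T] by (intro map_idI) (auto simp: split_def)
  have rmul_T: "rmul E (rho A a) ?T = map (\<lambda>(P, Q). (P, Q \<otimes>\<^bsub>E\<^esub> rho A a)) ?T"
    by (simp add: rmul_def)
  show "Erho.TEQ (lmul E (rho A a) ?T) (rmul E (rho A a) ?T)"
  proof (rule teq_if_coord_eq)
    show "lmul E (rho A a) ?T \<in> fsums E" "rmul E (rho A a) ?T \<in> fsums E"
      using a T by (simp_all add: Erho.fsums_lmul Erho.fsums_rmul rho_closed)
    fix l x assume l: "l < m" and x: "x \<in> carrier A"
    have "coord l (lmul E (rho A a) ?T) x = coord l ?T x \<otimes>\<^bsub>A\<^esub> a"
      by (rule coord_lmul_rho[OF a x l T])
    also have "coord l ?T x = lsum A (map (\<lambda>(p, q). gamma j (x \<otimes>\<^bsub>A\<^esub> p) \<otimes>\<^bsub>A\<^esub> \<one>\<^bsub>E\<^esub> q) (u l))"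
      using coord_qbT_comp[OF j l x E_one_closed] by (simp only: T_comp_one)
    also have "\<dots> = lsum A (map (\<lambda>(p, q). gamma j (x \<otimes>\<^bsub>A\<^esub> p) \<otimes>\<^bsub>A\<^esub> q) (u l))"
      by (rule lsum_u_cong[OF l]) simp
    also have "\<dots> \<otimes>\<^bsub>A\<^esub> a = lsum A (map (\<lambda>(p, q). gamma j (x \<otimes>\<^bsub>A\<^esub> p) \<otimes>\<^bsub>A\<^esub> q \<otimes>\<^bsub>A\<^esub> a) (u l))"
      using x j by (intro lsum_u_mult_right[OF l a]) (simp add: gamma_closed)
    also have "\<dots> = lsum A (map (\<lambda>(p, q). gamma j (x \<otimes>\<^bsub>A\<^esub> p) \<otimes>\<^bsub>A\<^esub> rho A a q) (u l))"
      using x j a by (intro lsum_u_cong[OF l]) (simp add: gamma_closed A.m_assoc)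
    also have "\<dots> = coord l (rmul E (rho A a) ?T) x"
      unfolding rmul_T by (rule coord_qbT_comp[OF j l x rho_closed[OF a], symmetric])
    finally show "coord l (lmul E (rho A a) ?T) x = coord l (rmul E (rho A a) ?T) x" .
  qed
qed

lemma qbB_apply:
  "f \<in> carrier E \<Longrightarrow> x \<in> carrier A \<Longrightarrow>
    qbB A B phi u j f x = lsum A (map (\<lambda>(p, q). p \<otimes>\<^bsub>A\<^esub> f (q \<otimes>\<^bsub>A\<^esub> x)) (u j))"
  by (simp add: qbB_def)

lemma qbB_closed:
  assumes j: "j < m" and f: "f \<in> carrier E"
  shows "qbB A B phi u j f \<in> carrier E"
proof -
  let ?b = "\<lambda>x. lsum A (map (\<lambda>(p, q). p \<otimes>\<^bsub>A\<^esub> f (q \<otimes>\<^bsub>A\<^esub> x)) (u j))"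
  have val: "p \<otimes>\<^bsub>A\<^esub> f (q \<otimes>\<^bsub>A\<^esub> x) \<in> carrier A"
    if "p \<in> carrier A" "q \<in> carrier A" "x \<in> carrier A" for p q x
    using that f by (simp add: E_closed)
  have closed: "?b x \<in> carrier A" if "x \<in> carrier A" for x
    using val that by (intro A.lsum_map_closed u_case_closed[OF j])
  have add: "?b (x \<oplus>\<^bsub>A\<^esub> y) = ?b x \<oplus>\<^bsub>A\<^esub> ?b y" if "x \<in> carrier A" "y \<in> carrier A" for x y
  proof -
    have "?b (x \<oplus>\<^bsub>A\<^esub> y) = lsum A (map (\<lambda>(p, q).
        p \<otimes>\<^bsub>A\<^esub> f (q \<otimes>\<^bsub>A\<^esub> x) \<oplus>\<^bsub>A\<^esub> p \<otimes>\<^bsub>A\<^esub> f (q \<otimes>\<^bsub>A\<^esub> y)) (u j))"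
      using that f by (intro lsum_u_cong[OF j]) (simp add: E_closed E_add A.r_distr)
    then show ?thesis
      using lsum_u_add[OF j] val that by simp
  qed
  have lin: "?b (phi d \<otimes>\<^bsub>A\<^esub> x) = phi d \<otimes>\<^bsub>A\<^esub> ?b x" if d: "d \<in> carrier B" and x: "x \<in> carrier A" for d x
  proof -
    let ?h = "\<lambda>(p, q). p \<otimes>\<^bsub>A\<^esub> f (q \<otimes>\<^bsub>A\<^esub> x)"
    have "lsum A (map ?h (lmul A (phi d) (u j))) = lsum A (map ?h (rmul A (phi d) (u j)))"
      using f x d j
      by (intro AB.lsum_balanced_cong[OF A _ _ _ _ u_balanced[OF j d]])
        (simp_all add: E_closed E_add E_lin A.l_distr A.r_distr A.m_assoc AB.fsums_lmul
          AB.fsums_rmul u_fsums)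
    moreover have "map ?h (lmul A (phi d) (u j))
        = map (\<lambda>(p, q). phi d \<otimes>\<^bsub>A\<^esub> p \<otimes>\<^bsub>A\<^esub> f (q \<otimes>\<^bsub>A\<^esub> x)) (u j)"
      by (simp add: lmul_def split_def)
    moreover have "lsum A (map (\<lambda>(p, q). phi d \<otimes>\<^bsub>A\<^esub> p \<otimes>\<^bsub>A\<^esub> f (q \<otimes>\<^bsub>A\<^esub> x)) (u j))
        = phi d \<otimes>\<^bsub>A\<^esub> ?b x"
      using d x val f
      by (subst lsum_u_mult_left[OF j]) (auto intro!: lsum_u_cong[OF j] simp: A.m_assoc E_closed)
    moreover have "map ?h (rmul A (phi d) (u j))
        = map (\<lambda>(p, q). p \<otimes>\<^bsub>A\<^esub> f (q \<otimes>\<^bsub>A\<^esub> phi d \<otimes>\<^bsub>A\<^esub> x)) (u j)"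
      by (simp add: rmul_def split_def)
    moreover have "lsum A (map (\<lambda>(p, q). p \<otimes>\<^bsub>A\<^esub> f (q \<otimes>\<^bsub>A\<^esub> phi d \<otimes>\<^bsub>A\<^esub> x)) (u j))
        = ?b (phi d \<otimes>\<^bsub>A\<^esub> x)"
      using d x by (intro lsum_u_cong[OF j]) (simp add: A.m_assoc)
    ultimately show ?thesis
      by simp
  qed
  show ?thesis
    unfolding qbB_def using f closed add lin by (simp add: E_memI)
qed

lemma qbB_bend:
  assumes j: "j < m"
  shows "qbB A B phi u j \<in> bend E (op_ring A) (rho A)"
  unfolding bend_def lend_def additive_on_def
proof (intro CollectI conjI ballI)
  show "qbB A B phi u j \<in> carrier E \<rightarrow> carrier E"
    using qbB_closed[OF j] by blast
next
  fix f g assume f: "f \<in> carrier E" and g: "g \<in> carrier E"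
  show "qbB A B phi u j (f \<oplus>\<^bsub>E\<^esub> g) = qbB A B phi u j f \<oplus>\<^bsub>E\<^esub> qbB A B phi u j g"
  proof (rule E_ext)
    fix x assume x: "x \<in> carrier A"
    have "qbB A B phi u j (f \<oplus>\<^bsub>E\<^esub> g) x = lsum A (map (\<lambda>(p, q).
        p \<otimes>\<^bsub>A\<^esub> f (q \<otimes>\<^bsub>A\<^esub> x) \<oplus>\<^bsub>A\<^esub> p \<otimes>\<^bsub>A\<^esub> g (q \<otimes>\<^bsub>A\<^esub> x)) (u j))"
      using f g x by (simp add: qbB_apply E_add_closed, intro lsum_u_cong[OF j])
        (simp add: E_closed A.r_distr)
    then show "qbB A B phi u j (f \<oplus>\<^bsub>E\<^esub> g) x = (qbB A B phi u j f \<oplus>\<^bsub>E\<^esub> qbB A B phi u j g) x"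
      using f g x by (simp add: lsum_u_add[OF j] qbB_apply E_closed)
  qed (use f g qbB_closed[OF j] in \<open>simp_all add: E_add_closed\<close>)
next
  fix a f assume "a \<in> carrier (op_ring A)" and f: "f \<in> carrier E"
  then have a: "a \<in> carrier A" by simp
  show "qbB A B phi u j (rho A a \<otimes>\<^bsub>E\<^esub> f) = rho A a \<otimes>\<^bsub>E\<^esub> qbB A B phi u j f"
  proof (rule E_ext)
    fix x assume x: "x \<in> carrier A"
    have "qbB A B phi u j (rho A a \<otimes>\<^bsub>E\<^esub> f) x
        = lsum A (map (\<lambda>(p, q). p \<otimes>\<^bsub>A\<^esub> f (q \<otimes>\<^bsub>A\<^esub> x) \<otimes>\<^bsub>A\<^esub> a) (u j))"
      using f a x by (simp add: qbB_apply E_mult_closed rho_closed, intro lsum_u_cong[OF j])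
        (simp add: E_closed A.m_assoc)
    also have "\<dots> = qbB A B phi u j f x \<otimes>\<^bsub>A\<^esub> a"
      using f a x by (simp add: qbB_apply lsum_u_mult_right[OF j] E_closed)
    finally show "qbB A B phi u j (rho A a \<otimes>\<^bsub>E\<^esub> f) x = (rho A a \<otimes>\<^bsub>E\<^esub> qbB A B phi u j f) x"
      using x f qbB_closed[OF j] by (simp add: E_closed)
  qed (use a f qbB_closed[OF j] in \<open>simp_all add: E_mult_closed rho_closed\<close>)
next
  fix a f assume "a \<in> carrier (op_ring A)" and f: "f \<in> carrier E"
  then have a: "a \<in> carrier A" by simp
  show "qbB A B phi u j (f \<otimes>\<^bsub>E\<^esub> rho A a) = qbB A B phi u j f \<otimes>\<^bsub>E\<^esub> rho A a"
  proof (rule E_ext)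
    fix x assume x: "x \<in> carrier A"
    show "qbB A B phi u j (f \<otimes>\<^bsub>E\<^esub> rho A a) x = (qbB A B phi u j f \<otimes>\<^bsub>E\<^esub> rho A a) x"
      using f a x by (simp add: qbB_apply E_mult_closed rho_closed, intro lsum_u_cong[OF j])
        (simp add: A.m_assoc)
  qed (use a f qbB_closed[OF j] in \<open>simp_all add: E_mult_closed rho_closed\<close>)
qed

lemma qb_End_expand:
  assumes f: "f \<in> carrier E" and y: "y \<in> carrier A" and w: "w \<in> carrier A"
  shows "lsum A (map (\<lambda>j. gamma j y \<otimes>\<^bsub>A\<^esub> qbB A B phi u j f w) [0..<m]) = f (y \<otimes>\<^bsub>A\<^esub> w)"
proof -
  have "\<one>\<^bsub>A\<^esub> \<otimes>\<^bsub>A\<^esub> f (y \<otimes>\<^bsub>A\<^esub> w) = lsum A (map (\<lambda>j. lsum A (map (\<lambda>(p, q).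
      (\<one>\<^bsub>A\<^esub> \<otimes>\<^bsub>A\<^esub> gamma j y \<otimes>\<^bsub>A\<^esub> p) \<otimes>\<^bsub>A\<^esub> f (q \<otimes>\<^bsub>A\<^esub> w)) (u j))) [0..<m])"
    using f y w by (intro qb_expand_balanced)
      (auto simp: E_closed E_add E_lin A.l_distr A.r_distr A.m_assoc)
  also have "\<dots> = lsum A (map (\<lambda>j. gamma j y \<otimes>\<^bsub>A\<^esub> qbB A B phi u j f w) [0..<m])"
  proof (rule A.lsum_cong)
    fix j assume "j \<in> set [0..<m]"
    then have j: "j < m" by simp
    have "gamma j y \<otimes>\<^bsub>A\<^esub> qbB A B phi u j f w
        = lsum A (map (\<lambda>(p, q). gamma j y \<otimes>\<^bsub>A\<^esub> (p \<otimes>\<^bsub>A\<^esub> f (q \<otimes>\<^bsub>A\<^esub> w))) (u j))"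
      using f y w j by (simp add: qbB_apply lsum_u_mult_left[OF j] gamma_closed E_closed)
    also have "\<dots> = lsum A (map (\<lambda>(p, q).
        (\<one>\<^bsub>A\<^esub> \<otimes>\<^bsub>A\<^esub> gamma j y \<otimes>\<^bsub>A\<^esub> p) \<otimes>\<^bsub>A\<^esub> f (q \<otimes>\<^bsub>A\<^esub> w)) (u j))"
      using f y w j by (intro lsum_u_cong[OF j]) (simp add: gamma_closed E_closed A.m_assoc)
    finally show "lsum A (map (\<lambda>(p, q).
        (\<one>\<^bsub>A\<^esub> \<otimes>\<^bsub>A\<^esub> gamma j y \<otimes>\<^bsub>A\<^esub> p) \<otimes>\<^bsub>A\<^esub> f (q \<otimes>\<^bsub>A\<^esub> w)) (u j))
        = gamma j y \<otimes>\<^bsub>A\<^esub> qbB A B phi u j f w" ..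
  qed
  finally show ?thesis
    using f y w by (simp add: E_closed)
qed

lemma qb_left_identity:
  assumes f: "f \<in> carrier E" and g: "g \<in> carrier E"
  shows "Erho.TEQ [(f, g)] (concat (map (\<lambda>j. map (\<lambda>(P, Q).
    (P, Q \<otimes>\<^bsub>E\<^esub> qbB A B phi u j f \<otimes>\<^bsub>E\<^esub> g)) (qbT A m gamma u j)) [0..<m]))"
proof -
  let ?H = "\<lambda>j. qbB A B phi u j f \<otimes>\<^bsub>E\<^esub> g"
  let ?R = "\<lambda>j. map (\<lambda>(P, Q). (P, Q \<otimes>\<^bsub>E\<^esub> ?H j)) (qbT A m gamma u j)"
  have H: "?H j \<in> carrier E" if "j < m" for j
    using that f g by (simp add: E_mult_closed qbB_closed)
  have R_fsums: "?R j \<in> fsums E" if "j < m" for j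
    using fsumsD[OF qbT_fsums[OF that]] H[OF that] by (force simp: fsums_def E_mult_closed)
  have "map (\<lambda>(P, Q). (P, Q \<otimes>\<^bsub>E\<^esub> qbB A B phi u j f \<otimes>\<^bsub>E\<^esub> g)) (qbT A m gamma u j) = ?R j"
    if "j < m" for j
    using fsumsD[OF qbT_fsums[OF that]] f g that
    by (intro map_cong refl) (auto simp: E.m_assoc qbB_closed)
  then have R_eq: "concat (map (\<lambda>j. map (\<lambda>(P, Q). (P, Q \<otimes>\<^bsub>E\<^esub> qbB A B phi u j f \<otimes>\<^bsub>E\<^esub> g))
      (qbT A m gamma u j)) [0..<m]) = concat (map ?R [0..<m])"
    by (intro arg_cong[where f = concat] map_cong) auto
  show ?thesis
    unfolding R_eq
  proof (rule teq_if_coord_eq)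
    show "[(f, g)] \<in> fsums E" "concat (map ?R [0..<m]) \<in> fsums E"
      using f g R_fsums by auto
    fix l x assume l: "l < m" and x: "x \<in> carrier A"
    have qg: "x \<otimes>\<^bsub>A\<^esub> p \<otimes>\<^bsub>A\<^esub> g q \<in> carrier A" if "p \<in> carrier A" "q \<in> carrier A" for p q
      using that x g by (simp add: E_closed)
    have T_carrier: "P \<in> carrier E \<and> Q \<in> carrier E" if "(P, Q) \<in> set (qbT A m gamma u j)" "j < m"
      for P Q j
      using fsumsD[OF qbT_fsums[OF that(2)] that(1)] .
    have "coord l (concat (map ?R [0..<m])) x = lsum A (map (\<lambda>j. coord l (?R j) x) [0..<m])"
      unfolding coord_apply[OF x] map_concat using H x l
      by (subst A.lsum_concat)
        (auto simp: comp_def E_closed E_mult_closed coeff_closed dest!: T_carrier)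
    also have "\<dots> = lsum A (map (\<lambda>j. lsum A (map (\<lambda>(p, q).
        gamma j (x \<otimes>\<^bsub>A\<^esub> p) \<otimes>\<^bsub>A\<^esub> ?H j q) (u l))) [0..<m])"
      using l x H by (intro A.lsum_cong coord_qbT_comp) simp_all
    also have "\<dots> = lsum A (map (\<lambda>b. lsum A (map (\<lambda>j. (\<lambda>(p, q).
        gamma j (x \<otimes>\<^bsub>A\<^esub> p) \<otimes>\<^bsub>A\<^esub> ?H j q) b) [0..<m])) (u l))"
      using l x f g by (intro A.lsum_swap u_case_closed) (simp_all add: gamma_closed E_closed qbB_closed)
    also have "\<dots> = lsum A (map (\<lambda>(p, q). f (x \<otimes>\<^bsub>A\<^esub> p \<otimes>\<^bsub>A\<^esub> g q)) (u l))"
    proof (rule A.lsum_cong)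
      fix b assume b: "b \<in> set (u l)"
      obtain p q where b_eq: "b = (p, q)" by fastforce
      with b l have "p \<in> carrier A" "q \<in> carrier A"
        by (auto dest: u_carrier)
      then show "lsum A (map (\<lambda>j. (\<lambda>(p, q). gamma j (x \<otimes>\<^bsub>A\<^esub> p) \<otimes>\<^bsub>A\<^esub> ?H j q) b) [0..<m])
          = (\<lambda>(p, q). f (x \<otimes>\<^bsub>A\<^esub> p \<otimes>\<^bsub>A\<^esub> g q)) b"
        using qb_End_expand[OF f, of "x \<otimes>\<^bsub>A\<^esub> p" "g q"] x g by (simp add: b_eq E_closed)
    qed
    also have "\<dots> = f (lsum A (map (\<lambda>(p, q). x \<otimes>\<^bsub>A\<^esub> p \<otimes>\<^bsub>A\<^esub> g q) (u l)))"
    proof -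
      have "f (lsum A (map (\<lambda>(p, q). x \<otimes>\<^bsub>A\<^esub> p \<otimes>\<^bsub>A\<^esub> g q) (u l)))
          = lsum A (map (\<lambda>b. f ((\<lambda>(p, q). x \<otimes>\<^bsub>A\<^esub> p \<otimes>\<^bsub>A\<^esub> g q) b)) (u l))"
        by (rule A.additive_on_lsum[OF E_fun[OF f] E_additive[OF f]]) (rule u_case_closed[OF l qg])
      then show ?thesis
        by (simp add: split_def)
    qed
    also have "lsum A (map (\<lambda>(p, q). x \<otimes>\<^bsub>A\<^esub> p \<otimes>\<^bsub>A\<^esub> g q) (u l)) = x \<otimes>\<^bsub>A\<^esub> coeff l g"
      unfolding coeff_def using x g
      by (subst lsum_u_mult_left[OF l]) (auto intro!: lsum_u_cong[OF l] simp: E_closed A.m_assoc)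
    also have "f (x \<otimes>\<^bsub>A\<^esub> coeff l g) = coord l [(f, g)] x"
      using x f g l by (simp add: coord_apply coeff_closed E_closed)
    finally show "coord l [(f, g)] x = coord l (concat (map ?R [0..<m])) x" ..
  qed
qed

lemma left_D2_qb_rho: "left_D2_qb E (op_ring A) (rho A) m (qbB A B phi u) (qbT A m gamma u)"
  unfolding left_D2_qb_def using qbB_bend qbT_tcent qb_left_identity by blast

end

theorem corollary5p2:
  fixes A :: "'a ring" and B :: "'b ring" and phi :: "'b \<Rightarrow> 'a"
  assumes "ring A" and "ring B" and "phi \<in> ring_hom B A"
    and "right_D2 A B phi"
  shows "left_D2 (End_ring A B phi) (op_ring A) (rho A) \<and>
         left_balanced (End_ring A B phi) (op_ring A) (rho A) \<and>
         (\<forall>m gamma u. right_D2_qb A B phi m gamma u \<longrightarrow>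
           left_D2_qb (End_ring A B phi) (op_ring A) (rho A) m (qbB A B phi u) (qbT A m gamma u))"
proof -
  have phi: "phi \<in> carrier B \<rightarrow> carrier A"
    using assms(3) by (simp add: ring_hom_def)
  interpret rho_extension A B phi
    by (rule rho_extension.intro[OF assms(1) phi])
  have left_qb: "left_D2_qb (End_ring A B phi) (op_ring A) (rho A) m (qbB A B phi u) (qbT A m gamma u)"
    if "right_D2_qb A B phi m gamma u" for m gamma u
    using right_D2_quasibase.left_D2_qb_rho[OF right_D2_quasibase.intro[OF
        rho_extension_axioms right_D2_quasibase_axioms.intro[OF that]]] .
  obtain m gamma u where "right_D2_qb A B phi m gamma u"
    using ring_extension.right_D2_qb_exists[OF ring_extension.intro[OF assms(1) phi] assms(4)] by blast
  then have "left_D2 (End_ring A B phi) (op_ring A) (rho A)"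
    by (rule Erho.left_D2_if_left_D2_qb[OF left_qb])
  with left_balanced left_qb show ?thesis
    by blast
qed

end
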